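(* Let $X$ be a connected, locally path connected space, let $K$ be an open subgroup of $\pi_1^{qtop}(X,x_0)$ and let $H\le K$ with $[K:H]<\infty$. Then $H$ is an open subgroup of $\pi_1^{qtop}(X,x_0)$ if and only if $X$ is homotopically Hausdorff relative to $H$.
   Context: $\pi_1^{qtop}(X,x_0)$ is $\pi_1(X,x_0)$ with the quotient topology induced from the compact-open topology on the space of loops at $x_0$. For $H\le\pi_1(X,x_0)$, $X$ is homotopically Hausdorff relative to $H$ if for every $g\in\pi_1(X,x_0)\setminus H$ and every path $\alpha$ starting at $x_0$ there is an open neighborhood $U$ of $\alpha(1)$ such that there is no loop $\gamma:(I,\partial I)\to(U,\alpha(1))$ with $[\alpha*\gamma*\alpha^{-1}]\in Hg$. *)

theory Defs
  imports "HOL-Analysis.Analysis" "HOL-Algebra.Coset"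
begin

section \<open>Path operations (sort-free copies of joinpaths / reversepath)\<close>

definition path_join :: "(real \<Rightarrow> 'a) \<Rightarrow> (real \<Rightarrow> 'a) \<Rightarrow> real \<Rightarrow> 'a" where
  "path_join g1 g2 = (\<lambda>x. if x \<le> 1/2 then g1 (2 * x) else g2 (2 * x - 1))"

definition path_reverse :: "(real \<Rightarrow> 'a) \<Rightarrow> real \<Rightarrow> 'a" where
  "path_reverse g = (\<lambda>x. g (1 - x))"

definition loops :: "'a topology \<Rightarrow> 'a \<Rightarrow> (real \<Rightarrow> 'a) set" where
  "loops X x0 = {g. pathin X g \<and> g 0 = x0 \<and> g 1 = x0}"

definition loop_homotopic :: "'a topology \<Rightarrow> 'a \<Rightarrow> (real \<Rightarrow> 'a) \<Rightarrow> (real \<Rightarrow> 'a) \<Rightarrow> bool" where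
  "loop_homotopic X x0 p q \<longleftrightarrow> p \<in> loops X x0 \<and> q \<in> loops X x0 \<and>
     homotopic_with (\<lambda>h. h 0 = x0 \<and> h 1 = x0) (top_of_set {0..1}) X p q"

definition loop_class :: "'a topology \<Rightarrow> 'a \<Rightarrow> (real \<Rightarrow> 'a) \<Rightarrow> (real \<Rightarrow> 'a) set" where
  "loop_class X x0 p = {q. loop_homotopic X x0 p q}"

definition fundamental_group :: "'a topology \<Rightarrow> 'a \<Rightarrow> ((real \<Rightarrow> 'a) set) monoid" where
  "fundamental_group X x0 =
     \<lparr>carrier = loop_class X x0 ` loops X x0,
      mult = (\<lambda>A B. loop_class X x0 (path_join (SOME p. p \<in> A) (SOME q. q \<in> B))),
      one = loop_class X x0 (\<lambda>t. x0)\<rparr>"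

definition compact_open_subbasis :: "'a topology \<Rightarrow> 'a \<Rightarrow> (real \<Rightarrow> 'a) set set" where
  "compact_open_subbasis X x0 =
     {{g \<in> loops X x0. g ` C \<subseteq> U} | C U. compactin (top_of_set {0..1}) C \<and> openin X U}"

definition loop_space_top :: "'a topology \<Rightarrow> 'a \<Rightarrow> (real \<Rightarrow> 'a) topology" where
  "loop_space_top X x0 = topology_generated_by (compact_open_subbasis X x0)"

definition pi1_qtop :: "'a topology \<Rightarrow> 'a \<Rightarrow> ((real \<Rightarrow> 'a) set) topology" where
  "pi1_qtop X x0 = topology (\<lambda>V. V \<subseteq> carrier (fundamental_group X x0) \<and>
      openin (loop_space_top X x0) {p \<in> loops X x0. loop_class X x0 p \<in> V})"

definition homotopically_hausdorff_rel ::
  "'a topology \<Rightarrow> 'a \<Rightarrow> ((real \<Rightarrow> 'a) set) set \<Rightarrow> bool" where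
  "homotopically_hausdorff_rel X x0 H \<longleftrightarrow>
     (\<forall>g \<in> carrier (fundamental_group X x0) - H. \<forall>\<alpha>. pathin X \<alpha> \<and> \<alpha> 0 = x0 \<longrightarrow>
        (\<exists>U. openin X U \<and> \<alpha> 1 \<in> U \<and>
           \<not> (\<exists>\<gamma>. pathin (subtopology X U) \<gamma> \<and> \<gamma> 0 = \<alpha> 1 \<and> \<gamma> 1 = \<alpha> 1 \<and>
                 loop_class X x0 (path_join (path_join \<alpha> \<gamma>) (path_reverse \<alpha>))
                   \<in> H #>\<^bsub>fundamental_group X x0\<^esub> g)))"

end

theory Submission
  imports Defs
begin

text \<open>Call an open neighbourhood \<open>U\<close> of \<open>\<alpha> 1\<close> a lasso neighbourhood for \<open>H\<close> if every lasso
  \<open>\<alpha> \<cdot> \<gamma> \<cdot> \<alpha>\<inverse>\<close> with \<open>\<gamma>\<close> a loop in \<open>U\<close> represents an element of \<open>H\<close>. Both sides of the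
  equivalence are equivalent to the existence of lasso neighbourhoods along every path \<open>\<alpha>\<close> from \<open>x0\<close>.

  If \<open>H\<close> is open, the lasso around the constant loop at \<open>\<alpha> 1\<close> has a basic compact-open
  neighbourhood inside the preimage of \<open>H\<close>, which gives a lasso neighbourhood; a lasso
  neighbourhood meets no coset \<open>H g \<noteq> H\<close>, which is the relative homotopically Hausdorff
  property. Conversely, lasso neighbourhoods for the open subgroup \<open>K\<close> exist, and intersecting one
  of them with neighbourhoods avoiding each of the finitely many cosets \<open>H k \<noteq> H\<close> in \<open>K\<close> gives
  a lasso neighbourhood for \<open>H\<close>.

  Finally, lasso neighbourhoods make \<open>H\<close> open, using local path connectedness: for a loop \<open>p\<close>
  with \<open>[p] \<in> H\<close>, subdivide \<open>[0,1]\<close> so finely that each piece of \<open>p\<close> lies in a lasso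
  neighbourhood at the end of an initial segment of \<open>p\<close>. A loop \<open>g\<close> that follows \<open>p\<close> piece by
  piece and is joined to it at the subdivision points inside path connected sets differs from
  \<open>p\<close> by a product of such lassos, so \<open>[g] \<in> H\<close>.\<close>

lemma prod_topology_top_of_set:
  "prod_topology (top_of_set S) (top_of_set T) = top_of_set (S \<times> (T::real set))"
  by (metis prod_topology_euclidean subtopology_Times)

lemma continuous_map_top_of_set_compose:
  assumes "continuous_map (top_of_set S) X a" "continuous_on T \<phi>" "\<phi> ` T \<subseteq> S"
  shows "continuous_map (top_of_set T) X (\<lambda>x. a (\<phi> x))"
proof -
  have "continuous_map (top_of_set T) (top_of_set S) \<phi>"
    using assms by (simp add: image_subset_iff Pi_iff)
  then have "continuous_map (top_of_set T) X (a \<circ> \<phi>)"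
    using assms(1) continuous_map_compose by blast
  then show ?thesis by (simp add: o_def)
qed

lemma convex_comb_in_unit_interval:
  assumes "(s::real) \<in> {0..1}" "u \<in> {0..1}" "v \<in> {0..1}"
  shows "u + (v - u) * s \<in> {0..1}"
proof -
  have "(1 - s) * u + s * v \<in> {0..1}"
    using assms convex_bound_le[of u 1 v "1-s" s] by (auto intro!: add_nonneg_nonneg mult_nonneg_nonneg)
  then show ?thesis by (simp add: algebra_simps)
qed

lemma pathin_reparam:
  assumes "pathin X a" "continuous_on {0..1} \<phi>" "\<phi> ` {0..1} \<subseteq> {0..1}"
  shows "pathin X (\<lambda>x. a (\<phi> x))"
  using continuous_map_top_of_set_compose[OF assms[unfolded pathin_def]] by (simp add: pathin_def)

lemma pathin_join:
  assumes a: "pathin X a" and b: "pathin X b" and e: "a 1 = b 0"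
  shows "pathin X (path_join a b)"
proof -
  have "continuous_map (top_of_set {0..1}) X (\<lambda>x. if x \<le> 1/2 then a (2*x) else b (2*x-1))"
  proof (rule continuous_map_cases_le)
    show "continuous_map (top_of_set {0..1}) euclideanreal (\<lambda>x. x)" by simp
    show "continuous_map (top_of_set {0..1}) euclideanreal (\<lambda>x. 1/2)" by simp
    have "{0..1} \<inter> {x \<in> topspace (top_of_set {0..1}). x \<le> (1/2::real)} = {x\<in>{0..1}. x \<le> 1/2}"
      by auto
    moreover have "continuous_map (top_of_set {x\<in>{0..1}. x \<le> 1/2}) X (\<lambda>x. a (2*x))"
      by (rule continuous_map_top_of_set_compose[OF a[unfolded pathin_def]])
        (auto intro!: continuous_intros)
    ultimately show "continuous_map (subtopology (top_of_set {0..1})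
        {x \<in> topspace (top_of_set {0..1}). x \<le> 1/2}) X (\<lambda>x. a (2*x))"
      unfolding subtopology_subtopology by simp
    have "{0..1} \<inter> {x \<in> topspace (top_of_set {0..1}). (1/2::real) \<le> x} = {x\<in>{0..1}. 1/2 \<le> x}"
      by auto
    moreover have "continuous_map (top_of_set {x\<in>{0..1}. 1/2 \<le> x}) X (\<lambda>x. b (2*x-1))"
      by (rule continuous_map_top_of_set_compose[OF b[unfolded pathin_def]])
        (auto intro!: continuous_intros)
    ultimately show "continuous_map (subtopology (top_of_set {0..1})
        {x \<in> topspace (top_of_set {0..1}). 1/2 \<le> x}) X (\<lambda>x. b (2*x-1))"
      unfolding subtopology_subtopology by simp
    show "a (2*x) = b (2*x-1)" if "x = 1/2" for x
    proof -
      have "2*x = 1" "2*x-1 = 0" using that by auto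
      then show ?thesis using e by simp
    qed
  qed
  then show ?thesis by (simp add: pathin_def path_join_def)
qed

lemma pathin_reverse: "pathin X a \<Longrightarrow> pathin X (path_reverse a)"
  unfolding path_reverse_def by (rule pathin_reparam) (auto intro!: continuous_intros)

lemma path_join_0 [simp]: "path_join a b 0 = a 0"
  and path_join_1 [simp]: "path_join a b 1 = b 1"
  by (auto simp: path_join_def)

lemma path_reverse_0 [simp]: "path_reverse a 0 = a 1"
  and path_reverse_1 [simp]: "path_reverse a 1 = a 0"
  by (auto simp: path_reverse_def)

lemma path_reverse_reverse [simp]: "path_reverse (path_reverse a) = a"
  by (auto simp: path_reverse_def)

definition subpathin :: "(real \<Rightarrow> 'a) \<Rightarrow> real \<Rightarrow> real \<Rightarrow> real \<Rightarrow> 'a" where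
  "subpathin p u v = (\<lambda>x. p (u + (v - u) * x))"

lemma subpathin_0 [simp]: "subpathin p u v 0 = p u"
  and subpathin_1 [simp]: "subpathin p u v 1 = p v"
  by (auto simp: subpathin_def)

lemma subpathin_trivial: "subpathin p u u = (\<lambda>x. p u)"
  by (auto simp: subpathin_def)

lemma subpathin_0_1: "subpathin p 0 1 = p"
  by (auto simp: subpathin_def)

lemma pathin_subpathin:
  assumes "pathin X p" "u \<in> {0..1}" "v \<in> {0..1}"
  shows "pathin X (subpathin p u v)"
  unfolding subpathin_def
  apply (rule pathin_reparam[OF assms(1)])
   apply (intro continuous_intros)
  unfolding image_subset_iff using assms convex_comb_in_unit_interval by blast

lemma pathin_subtopology_subpathin:
  assumes "pathin X p" "u \<in> {0..1}" "v \<in> {0..1}" "p ` {min u v..max u v} \<subseteq> U"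
  shows "pathin (subtopology X U) (subpathin p u v)"
proof -
  have "subpathin p u v x \<in> U" if "x \<in> {0..1}" for x
  proof -
    have "(1 - x) * min u v + x * min u v \<le> (1 - x) * u + x * v"
      "(1 - x) * u + x * v \<le> (1 - x) * max u v + x * max u v"
      using that by (intro add_mono mult_left_mono; simp)+
    then have "u + (v - u) * x \<in> {min u v..max u v}"
      by (simp add: algebra_simps)
    then show ?thesis
      using assms(4) unfolding subpathin_def by blast
  qed
  then show ?thesis
    using pathin_subpathin[OF assms(1-3)] by (simp add: pathin_subtopology)
qed

lemma pathin_subtopology_mono:
  "pathin (subtopology X S) g \<Longrightarrow> S \<subseteq> T \<Longrightarrow> pathin (subtopology X T) g"
  by (auto simp: pathin_subtopology)

section \<open>Homotopy of paths relative to the endpoints\<close>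

definition homotopic_pathin :: "'a topology \<Rightarrow> (real \<Rightarrow> 'a) \<Rightarrow> (real \<Rightarrow> 'a) \<Rightarrow> bool" where
  "homotopic_pathin X a b \<longleftrightarrow> pathin X a \<and> pathin X b \<and>
     homotopic_with (\<lambda>h. h 0 = a 0 \<and> h 1 = a 1) (top_of_set {0..1}) X a b"

lemma homotopic_pathin_ends: "homotopic_pathin X a b \<Longrightarrow> b 0 = a 0 \<and> b 1 = a 1"
  unfolding homotopic_pathin_def using homotopic_with_imp_property by blast

lemma homotopic_pathin_imp_pathin: "homotopic_pathin X a b \<Longrightarrow> pathin X a \<and> pathin X b"
  unfolding homotopic_pathin_def by blast

lemma homotopic_pathin_refl: "pathin X a \<Longrightarrow> homotopic_pathin X a a"
  by (simp add: homotopic_pathin_def pathin_def)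

lemma homotopic_pathin_sym:
  assumes "homotopic_pathin X a b"
  shows "homotopic_pathin X b a"
proof -
  have e: "b 0 = a 0" "b 1 = a 1" using homotopic_pathin_ends[OF assms] by auto
  show ?thesis
    using assms unfolding homotopic_pathin_def e by (simp add: homotopic_with_sym)
qed

lemma homotopic_pathin_trans:
  assumes "homotopic_pathin X a b" "homotopic_pathin X b c"
  shows "homotopic_pathin X a c"
proof -
  have e: "b 0 = a 0" "b 1 = a 1" using homotopic_pathin_ends[OF assms(1)] by auto
  have "homotopic_with (\<lambda>h. h 0 = a 0 \<and> h 1 = a 1) (top_of_set {0..1}) X a b"
       "homotopic_with (\<lambda>h. h 0 = a 0 \<and> h 1 = a 1) (top_of_set {0..1}) X b c"
    using assms unfolding homotopic_pathin_def e by auto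
  then show ?thesis
    using assms unfolding homotopic_pathin_def using homotopic_with_trans by blast
qed

lemma homotopic_pathin_cong:
  assumes ab: "homotopic_pathin X a b"
    and a': "\<And>x. x \<in> {0..1} \<Longrightarrow> a' x = a x" and b': "\<And>x. x \<in> {0..1} \<Longrightarrow> b' x = b x"
  shows "homotopic_pathin X a' b'"
proof -
  have "pathin X a" "pathin X b"
    using homotopic_pathin_imp_pathin[OF ab] by auto
  then have "pathin X a'" "pathin X b'"
    unfolding pathin_def using a' b' by (auto intro: continuous_map_eq)
  moreover have "homotopic_with (\<lambda>h. h 0 = a 0 \<and> h 1 = a 1) (top_of_set {0..1}) X a' b'"
  proof (rule homotopic_with_eq[where f=a and g=b])
    show "homotopic_with (\<lambda>h. h 0 = a 0 \<and> h 1 = a 1) (top_of_set {0..1}) X a b"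
      using ab by (simp add: homotopic_pathin_def)
    show "(h 0 = a 0 \<and> h 1 = a 1) \<longleftrightarrow> (k 0 = a 0 \<and> k 1 = a 1)"
      if "\<And>x. x \<in> topspace (top_of_set {0..1}) \<Longrightarrow> h x = k x" for h k :: "real \<Rightarrow> 'a"
      using that[of 0] that[of 1] by simp
  qed (use a' b' in simp_all)
  moreover have "a' 0 = a 0" "a' 1 = a 1"
    using a' by simp_all
  ultimately show ?thesis
    unfolding homotopic_pathin_def by simp
qed

lemma homotopic_pathin_reparam:
  assumes p: "pathin X p"
    and \<phi>: "continuous_on {0..1} \<phi>" "\<phi> ` {0..1} \<subseteq> {0..1}"
    and \<psi>: "continuous_on {0..1} \<psi>" "\<psi> ` {0..1} \<subseteq> {0..1}"
    and ends: "\<phi> 0 = \<psi> 0" "\<phi> 1 = \<psi> 1"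
    and a: "\<And>x. x \<in> {0..1} \<Longrightarrow> a x = p (\<phi> x)" and b: "\<And>x. x \<in> {0..1} \<Longrightarrow> b x = p (\<psi> x)"
  shows "homotopic_pathin X a b"
proof (rule homotopic_pathin_cong[OF _ a b])
  define h where "h = (\<lambda>z. p (\<phi> (snd z) + (\<psi> (snd z) - \<phi> (snd z)) * fst z))"
  have "\<phi> x + (\<psi> x - \<phi> x) * s \<in> {0..1}" if "s \<in> {0..1}" "x \<in> {0..1}" for s x
    using that \<phi>(2) \<psi>(2) by (intro convex_comb_in_unit_interval) blast+
  then have "continuous_map (top_of_set ({0..1::real} \<times> {0..1::real})) X h"
    unfolding h_def
    by (intro continuous_map_top_of_set_compose[OF p[unfolded pathin_def]])
      (auto intro!: continuous_intros continuous_on_compose2[OF \<phi>(1)] continuous_on_compose2[OF \<psi>(1)])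
  then show "homotopic_pathin X (\<lambda>x. p (\<phi> x)) (\<lambda>x. p (\<psi> x))"
    unfolding homotopic_pathin_def homotopic_with_def prod_topology_top_of_set
    using ends by (intro conjI exI[where x=h] pathin_reparam[OF p] \<phi> \<psi>) (auto simp: h_def)
qed

lemma homotopic_pathin_join:
  assumes A: "homotopic_pathin X a a'" and B: "homotopic_pathin X b b'" and e: "a 1 = b 0"
  shows "homotopic_pathin X (path_join a b) (path_join a' b')"
proof -
  define S where "S = ({0..1::real} \<times> {0..1::real})"
  obtain h1 where h1: "continuous_map (top_of_set S) X h1"
    "\<And>x. h1(0,x) = a x" "\<And>x. h1(1,x) = a' x" "\<And>t. t \<in> {0..1} \<Longrightarrow> h1(t,0) = a 0 \<and> h1(t,1) = a 1"
    using A unfolding homotopic_pathin_def homotopic_with_def prod_topology_top_of_set S_def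
    by (auto simp: Ball_def)
  obtain h2 where h2: "continuous_map (top_of_set S) X h2"
    "\<And>x. h2(0,x) = b x" "\<And>x. h2(1,x) = b' x" "\<And>t. t \<in> {0..1} \<Longrightarrow> h2(t,0) = b 0 \<and> h2(t,1) = b 1"
    using B unfolding homotopic_pathin_def homotopic_with_def prod_topology_top_of_set S_def
    by (auto simp: Ball_def)
  have e': "a' 1 = b' 0" using homotopic_pathin_ends[OF A] homotopic_pathin_ends[OF B] e by auto
  define k where "k = (\<lambda>z. if snd z \<le> 1/2 then h1 (fst z, 2 * snd z) else h2 (fst z, 2 * snd z - 1))"
  have "continuous_map (top_of_set S) X k"
    unfolding k_def
  proof (rule continuous_map_cases_le)
    show "continuous_map (top_of_set S) euclideanreal snd"
      by (simp add: continuous_on_snd)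
    show "continuous_map (top_of_set S) euclideanreal (\<lambda>x. 1/2)" by simp
    have "S \<inter> {x \<in> topspace (top_of_set S). snd x \<le> (1/2::real)} = {x\<in>S. snd x \<le> 1/2}" by auto
    moreover have "continuous_map (top_of_set {x\<in>S. snd x \<le> 1/2}) X (\<lambda>z. h1 (fst z, 2 * snd z))"
      by (rule continuous_map_top_of_set_compose[OF h1(1)])
        (auto intro!: continuous_intros simp: S_def mem_Times_iff)
    ultimately show "continuous_map (subtopology (top_of_set S)
        {x \<in> topspace (top_of_set S). snd x \<le> 1/2}) X (\<lambda>z. h1 (fst z, 2 * snd z))"
      unfolding subtopology_subtopology by simp
    have "S \<inter> {x \<in> topspace (top_of_set S). (1/2::real) \<le> snd x} = {x\<in>S. 1/2 \<le> snd x}" by auto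
    moreover have "continuous_map (top_of_set {x\<in>S. 1/2 \<le> snd x}) X (\<lambda>z. h2 (fst z, 2 * snd z - 1))"
      by (rule continuous_map_top_of_set_compose[OF h2(1)])
        (auto intro!: continuous_intros simp: S_def mem_Times_iff)
    ultimately show "continuous_map (subtopology (top_of_set S)
        {x \<in> topspace (top_of_set S). 1/2 \<le> snd x}) X (\<lambda>z. h2 (fst z, 2 * snd z - 1))"
      unfolding subtopology_subtopology by simp
    show "h1 (fst z, 2 * snd z) = h2 (fst z, 2 * snd z - 1)"
      if "z \<in> topspace (top_of_set S)" "snd z = 1/2" for z
    proof -
      have "2 * snd z = 1" "2 * snd z - 1 = 0" "fst z \<in> {0..1}" using that by (auto simp: S_def)
      then show ?thesis using h1(4) h2(4) e by simp
    qed
  qed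
  moreover have "pathin X (path_join a b)" "pathin X (path_join a' b')"
    using A B e e' by (auto intro!: pathin_join dest: homotopic_pathin_imp_pathin)
  ultimately show ?thesis
    unfolding homotopic_pathin_def homotopic_with_def prod_topology_top_of_set
    using h1 h2 by (intro conjI exI[where x=k]) (auto simp: k_def S_def path_join_def)
qed

lemma homotopic_pathin_join_left:
  "homotopic_pathin X a a' \<Longrightarrow> pathin X b \<Longrightarrow> a 1 = b 0 \<Longrightarrow>
   homotopic_pathin X (path_join a b) (path_join a' b)"
  by (rule homotopic_pathin_join) (auto intro: homotopic_pathin_refl)

lemma homotopic_pathin_join_right:
  "homotopic_pathin X b b' \<Longrightarrow> pathin X a \<Longrightarrow> a 1 = b 0 \<Longrightarrow>
   homotopic_pathin X (path_join a b) (path_join a b')"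
  by (rule homotopic_pathin_join) (auto intro: homotopic_pathin_refl)

lemma homotopic_pathin_assoc:
  assumes a: "pathin X a" and b: "pathin X b" and c: "pathin X c" and e: "a 1 = b 0" "b 1 = c 0"
  shows "homotopic_pathin X (path_join (path_join a b) c) (path_join a (path_join b c))"
proof (rule homotopic_pathin_reparam[where p="path_join (path_join a b) c" and \<phi>="\<lambda>x. x"
      and \<psi>="\<lambda>x. max (x/2) (max (x - 1/4) (2*x-1))"])
  show "pathin X (path_join (path_join a b) c)"
    using a b c e by (intro pathin_join) auto
  show "continuous_on {0..1} (\<lambda>x::real. max (x/2) (max (x - 1/4) (2*x-1)))"
    by (intro continuous_intros) auto
  show "(\<lambda>x::real. max (x/2) (max (x - 1/4) (2*x-1))) ` {0..1} \<subseteq> {0..1}"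
    by (auto simp: max_def)
  show "path_join a (path_join b c) x = path_join (path_join a b) c (max (x/2) (max (x - 1/4) (2*x-1)))"
    if "x \<in> {0..1}" for x
  proof -
    consider "x \<le> 1/2" | "1/2 < x" "x \<le> 3/4" | "3/4 < x" by linarith
    then show ?thesis
    proof cases
      case 1
      then have "max (x/2) (max (x - 1/4) (2*x-1)) = x/2" by auto
      then show ?thesis using 1 by (simp add: path_join_def)
    next
      case 2
      then have m: "max (x/2) (max (x - 1/4) (2*x-1)) = x - 1/4" by auto
      have "2 * (2 * (x - 1/4)) - 1 = 2 * (2 * x - 1)" by (simp add: algebra_simps)
      then show ?thesis using 2 unfolding m by (simp add: path_join_def)
    next
      case 3
      then have m: "max (x/2) (max (x - 1/4) (2*x-1)) = 2*x - 1" by auto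
      have "2 * (2 * x - 1) - 1 = 2 * (2 * x - 1) - 1" by simp
      then show ?thesis using 3 unfolding m by (simp add: path_join_def)
    qed
  qed
qed auto

lemma homotopic_pathin_lunit:
  assumes a: "pathin X a"
  shows "homotopic_pathin X (path_join (\<lambda>t. a 0) a) a"
proof (rule homotopic_pathin_reparam[where p="a" and \<phi>="\<lambda>x. max 0 (2*x-1)" and \<psi>="\<lambda>x. x"])
  show "continuous_on {0..1} (\<lambda>x::real. max 0 (2*x-1))" by (intro continuous_intros)
qed (use a in \<open>auto simp: path_join_def\<close>)

lemma homotopic_pathin_runit:
  assumes a: "pathin X a"
  shows "homotopic_pathin X (path_join a (\<lambda>t. a 1)) a"
proof (rule homotopic_pathin_reparam[where p="a" and \<phi>="\<lambda>x. min 1 (2*x)" and \<psi>="\<lambda>x. x"])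
  show "continuous_on {0..1} (\<lambda>x::real. min 1 (2*x))" by (intro continuous_intros)
qed (use a in \<open>auto simp: path_join_def\<close>)

lemma homotopic_pathin_rinv:
  assumes a: "pathin X a"
  shows "homotopic_pathin X (path_join a (path_reverse a)) (\<lambda>t. a 0)"
proof (rule homotopic_pathin_reparam[where p="a" and \<phi>="\<lambda>x. min (2*x) (2-2*x)" and \<psi>="\<lambda>x. 0"])
  show "continuous_on {0..1} (\<lambda>x::real. min (2*x) (2-2*x))" by (intro continuous_intros)
  show "path_join a (path_reverse a) x = a (min (2*x) (2-2*x))" if "x \<in> {0..1}" for x
  proof (cases "x \<le> 1/2")
    case True
    then have "min (2*x) (2-2*x) = 2*x" by auto
    then show ?thesis using True by (simp add: path_join_def)
  next
    case False
    then have "min (2*x) (2-2*x) = 1 - (2*x-1)" by auto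
    then show ?thesis using False by (simp add: path_join_def path_reverse_def)
  qed
qed (use a in \<open>auto\<close>)

lemma homotopic_pathin_linv:
  assumes a: "pathin X a"
  shows "homotopic_pathin X (path_join (path_reverse a) a) (\<lambda>t. a 1)"
  using homotopic_pathin_rinv[OF pathin_reverse[OF a]] by simp

lemma homotopic_pathin_subpathin_join:
  assumes p: "pathin X p" and uvw: "u \<in> {0..1}" "v \<in> {0..1}" "w \<in> {0..1}"
  shows "homotopic_pathin X (path_join (subpathin p u v) (subpathin p v w)) (subpathin p u w)"
proof (rule homotopic_pathin_reparam[where p="p" and \<phi>="\<lambda>x. u + (v-u) * min (2*x) 1 + (w-v) * max 0 (2*x-1)"
      and \<psi>="\<lambda>x. u + (w-u) * x"])
  show "continuous_on {0..1} (\<lambda>x. u + (v-u) * min (2*x) 1 + (w-v) * max 0 (2*x-1))"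
    by (intro continuous_intros)
  show "continuous_on {0..1} (\<lambda>x. u + (w-u) * x)"
    by (intro continuous_intros)
  show "(\<lambda>x. u + (w-u) * x) ` {0..1} \<subseteq> {0..1}"
    unfolding image_subset_iff using uvw convex_comb_in_unit_interval by blast
  have reparam: "u + (v-u) * min (2*x) 1 + (w-v) * max 0 (2*x-1) \<in> {0..1} \<and>
        path_join (subpathin p u v) (subpathin p v w) x = p (u + (v-u) * min (2*x) 1 + (w-v) * max 0 (2*x-1))"
    if x: "x \<in> {0..1}" for x
  proof (cases "x \<le> 1/2")
    case True
    then have "min (2*x) 1 = 2*x" "max 0 (2*x-1) = 0" by auto
    then have "u + (v-u) * min (2*x) 1 + (w-v) * max 0 (2*x-1) = u + (v-u) * (2*x)" by simp
    moreover have "u + (v-u) * (2*x) \<in> {0..1}" using x True uvw convex_comb_in_unit_interval[of "2*x" u v] by simp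
    ultimately show ?thesis using True by (simp add: path_join_def subpathin_def)
  next
    case False
    then have "min (2*x) 1 = 1" "max 0 (2*x-1) = 2*x-1" by auto
    then have "u + (v-u) * min (2*x) 1 + (w-v) * max 0 (2*x-1) = v + (w-v) * (2*x-1)" by (simp add: algebra_simps)
    moreover have "v + (w-v) * (2*x-1) \<in> {0..1}" using x False uvw convex_comb_in_unit_interval[of "2*x-1" v w] by simp
    ultimately show ?thesis using False by (simp add: path_join_def subpathin_def)
  qed
  show "(\<lambda>x. u + (v-u) * min (2*x) 1 + (w-v) * max 0 (2*x-1)) ` {0..1} \<subseteq> {0..1}"
    unfolding image_subset_iff using reparam by blast
  show "\<And>x. x \<in> {0..1} \<Longrightarrow> path_join (subpathin p u v) (subpathin p v w) x = p (u + (v-u) * min (2*x) 1 + (w-v) * max 0 (2*x-1))"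
    using reparam by blast
  show "pathin X p" by (rule p)
  show "u + (v-u) * min (2*0) 1 + (w-v) * max 0 (2*0-1) = u + (w-u) * (0::real)" by simp
  show "u + (v-u) * min (2*1) 1 + (w-v) * max 0 (2*1-1) = u + (w-u) * (1::real)" by simp
  show "subpathin p u w x = p (u + (w-u) * x)" for x by (simp add: subpathin_def)
qed

lemma homotopic_pathin_cancel_left:
  assumes v: "pathin X v" and q: "pathin X q" and e: "v 1 = q 0"
  shows "homotopic_pathin X (path_join (path_reverse v) (path_join v q)) q"
proof -
  have "homotopic_pathin X (path_join (path_reverse v) (path_join v q)) (path_join (path_join (path_reverse v) v) q)"
    using homotopic_pathin_sym[OF homotopic_pathin_assoc[OF pathin_reverse[OF v] v q]] e by simp
  moreover have "homotopic_pathin X (path_join (path_join (path_reverse v) v) q) (path_join (\<lambda>t. v 1) q)"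
    using homotopic_pathin_join_left[OF homotopic_pathin_linv[OF v] q] e by simp
  moreover have "homotopic_pathin X (path_join (\<lambda>t. v 1) q) q"
    using homotopic_pathin_lunit[OF q] e by simp
  ultimately show ?thesis using homotopic_pathin_trans by blast
qed


lemma loopsD: "p \<in> loops X x0 \<Longrightarrow> pathin X p \<and> p 0 = x0 \<and> p 1 = x0"
  by (simp add: loops_def)

lemma loop_homotopic_iff: "loop_homotopic X x0 p q \<longleftrightarrow> p \<in> loops X x0 \<and> homotopic_pathin X p q"
proof
  assume L: "loop_homotopic X x0 p q"
  then show "p \<in> loops X x0 \<and> homotopic_pathin X p q"
    unfolding loop_homotopic_def homotopic_pathin_def loops_def by auto
next
  assume R: "p \<in> loops X x0 \<and> homotopic_pathin X p q"
  then have "q \<in> loops X x0" using homotopic_pathin_ends[of X p q] homotopic_pathin_imp_pathin[of X p q] by (auto simp: loops_def)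
  then show "loop_homotopic X x0 p q"
    using R unfolding loop_homotopic_def homotopic_pathin_def loops_def by auto
qed

lemma mem_loop_class: "q \<in> loop_class X x0 p \<longleftrightarrow> p \<in> loops X x0 \<and> homotopic_pathin X p q"
  by (simp add: loop_class_def loop_homotopic_iff)

lemma loop_class_self: "p \<in> loops X x0 \<Longrightarrow> p \<in> loop_class X x0 p"
  by (simp add: mem_loop_class homotopic_pathin_refl loopsD)

lemma loops_homotopic_pathin: "p \<in> loops X x0 \<Longrightarrow> homotopic_pathin X p q \<Longrightarrow> q \<in> loops X x0"
  using homotopic_pathin_ends[of X p q] homotopic_pathin_imp_pathin[of X p q] by (auto simp: loops_def)

lemma loop_class_eq_iff:
  assumes "p \<in> loops X x0" "q \<in> loops X x0"
  shows "loop_class X x0 p = loop_class X x0 q \<longleftrightarrow> homotopic_pathin X p q"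
proof
  assume "loop_class X x0 p = loop_class X x0 q"
  then have "q \<in> loop_class X x0 p" using loop_class_self[OF assms(2)] by simp
  then show "homotopic_pathin X p q" by (simp add: mem_loop_class)
next
  assume pq: "homotopic_pathin X p q"
  have "homotopic_pathin X p r \<longleftrightarrow> homotopic_pathin X q r" for r
    using homotopic_pathin_trans[OF homotopic_pathin_sym[OF pq], of r] homotopic_pathin_trans[OF pq, of r] by blast
  then show "loop_class X x0 p = loop_class X x0 q"
    using assms unfolding set_eq_iff mem_loop_class by blast
qed

lemma loops_join: "a \<in> loops X x0 \<Longrightarrow> b \<in> loops X x0 \<Longrightarrow> path_join a b \<in> loops X x0"
  by (auto simp: loops_def intro!: pathin_join)

lemma loops_reverse: "a \<in> loops X x0 \<Longrightarrow> path_reverse a \<in> loops X x0"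
  by (auto simp: loops_def intro!: pathin_reverse)

lemma loops_const: "x0 \<in> topspace X \<Longrightarrow> (\<lambda>t. x0) \<in> loops X x0"
  by (auto simp: loops_def)

lemma fundamental_group_carrier: "carrier (fundamental_group X x0) = loop_class X x0 ` loops X x0"
  by (simp add: fundamental_group_def)

lemma fundamental_group_one: "\<one>\<^bsub>fundamental_group X x0\<^esub> = loop_class X x0 (\<lambda>t. x0)"
  by (simp add: fundamental_group_def)

lemma fundamental_group_mult:
  assumes a: "a \<in> loops X x0" and b: "b \<in> loops X x0"
  shows "loop_class X x0 a \<otimes>\<^bsub>fundamental_group X x0\<^esub> loop_class X x0 b = loop_class X x0 (path_join a b)"
proof -
  define p where "p = (SOME p. p \<in> loop_class X x0 a)"
  define q where "q = (SOME q. q \<in> loop_class X x0 b)"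
  have "p \<in> loop_class X x0 a" unfolding p_def using loop_class_self[OF a] by (rule someI[where x=a])
  then have p: "homotopic_pathin X a p" by (simp add: mem_loop_class)
  have "q \<in> loop_class X x0 b" unfolding q_def using loop_class_self[OF b] by (rule someI[where x=b])
  then have q: "homotopic_pathin X b q" by (simp add: mem_loop_class)
  have pl: "p \<in> loops X x0" using loops_homotopic_pathin[OF a p] .
  have ql: "q \<in> loops X x0" using loops_homotopic_pathin[OF b q] .
  have "homotopic_pathin X (path_join p q) (path_join a b)"
    using homotopic_pathin_join[OF homotopic_pathin_sym[OF p] homotopic_pathin_sym[OF q]] pl ql by (simp add: loops_def)
  then have "loop_class X x0 (path_join p q) = loop_class X x0 (path_join a b)"
    using loop_class_eq_iff[OF loops_join[OF pl ql] loops_join[OF a b]] by blast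
  then show ?thesis by (simp add: fundamental_group_def p_def q_def)
qed

lemma group_fundamental_group:
  assumes x0: "x0 \<in> topspace X"
  shows "group (fundamental_group X x0)"
proof (rule groupI)
  let ?G = "fundamental_group X x0"
  show "\<one>\<^bsub>?G\<^esub> \<in> carrier ?G" using loops_const[OF x0] by (simp add: fundamental_group_carrier fundamental_group_one)
  fix x y z assume x: "x \<in> carrier ?G" and y: "y \<in> carrier ?G" and z: "z \<in> carrier ?G"
  obtain a b c where a: "a \<in> loops X x0" "x = loop_class X x0 a" and b: "b \<in> loops X x0" "y = loop_class X x0 b"
    and c: "c \<in> loops X x0" "z = loop_class X x0 c"
    using x y z by (auto simp: fundamental_group_carrier)
  show "x \<otimes>\<^bsub>?G\<^esub> y \<in> carrier ?G" using a b by (simp add: fundamental_group_mult fundamental_group_carrier loops_join)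
  show "x \<otimes>\<^bsub>?G\<^esub> y \<otimes>\<^bsub>?G\<^esub> z = x \<otimes>\<^bsub>?G\<^esub> (y \<otimes>\<^bsub>?G\<^esub> z)"
    using a b c homotopic_pathin_assoc[of X a b c]
    by (simp add: fundamental_group_mult loops_join loop_class_eq_iff loopsD)
  show "\<one>\<^bsub>?G\<^esub> \<otimes>\<^bsub>?G\<^esub> x = x"
    using a homotopic_pathin_lunit[of X a] loops_const[OF x0]
    by (simp add: fundamental_group_mult fundamental_group_one loops_join loop_class_eq_iff loopsD)
  have "loop_class X x0 (path_reverse a) \<otimes>\<^bsub>?G\<^esub> x = \<one>\<^bsub>?G\<^esub>"
    using a homotopic_pathin_linv[of X a] loops_const[OF x0]
    by (simp add: fundamental_group_mult fundamental_group_one loops_join loops_reverse loop_class_eq_iff loopsD)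
  then show "\<exists>y \<in> carrier ?G. y \<otimes>\<^bsub>?G\<^esub> x = \<one>\<^bsub>?G\<^esub>"
    using a(1) loops_reverse[OF a(1)] unfolding fundamental_group_carrier by blast
qed

lemma loop_class_in_carrier: "p \<in> loops X x0 \<Longrightarrow> loop_class X x0 p \<in> carrier (fundamental_group X x0)"
  by (simp add: fundamental_group_carrier)

section \<open>Lassos\<close>

definition lasso :: "(real \<Rightarrow> 'a) \<Rightarrow> (real \<Rightarrow> 'a) \<Rightarrow> (real \<Rightarrow> 'a) \<Rightarrow> real \<Rightarrow> 'a" where
  "lasso u \<beta> v = path_join (path_join u \<beta>) (path_reverse v)"

lemma lasso_in_loops:
  assumes "pathin X u" "pathin X \<beta>" "pathin X v" "u 0 = x0" "v 0 = x0" "u 1 = \<beta> 0" "\<beta> 1 = v 1"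
  shows "lasso u \<beta> v \<in> loops X x0"
  using assms unfolding lasso_def loops_def by (auto intro!: pathin_join pathin_reverse)

lemma lasso_mult:
  assumes u: "pathin X u" and b: "pathin X \<beta>" and v: "pathin X v" and b': "pathin X \<beta>'" and w: "pathin X w"
    and e: "u 0 = x0" "v 0 = x0" "w 0 = x0" "u 1 = \<beta> 0" "\<beta> 1 = v 1" "\<beta>' 0 = v 1" "\<beta>' 1 = w 1"
  shows "loop_class X x0 (lasso u \<beta> v) \<otimes>\<^bsub>fundamental_group X x0\<^esub> loop_class X x0 (lasso v \<beta>' w)
         = loop_class X x0 (lasso u (path_join \<beta> \<beta>') w)"
proof -
  have ub: "pathin X (path_join u \<beta>)" using u b e by (intro pathin_join) auto
  have vb: "pathin X (path_join v \<beta>')" using v b' e by (intro pathin_join) auto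
  have vbw: "pathin X (path_join (path_join v \<beta>') (path_reverse w))" using vb w e by (intro pathin_join[OF vb] pathin_reverse) auto
  have bw: "pathin X (path_join \<beta>' (path_reverse w))" using b' w e by (intro pathin_join pathin_reverse) auto
  have bb: "pathin X (path_join \<beta> \<beta>')" using b b' e by (intro pathin_join) auto
  have 1: "homotopic_pathin X (path_join (lasso u \<beta> v) (lasso v \<beta>' w))
     (path_join (path_join u \<beta>) (path_join (path_reverse v) (path_join (path_join v \<beta>') (path_reverse w))))"
    unfolding lasso_def using homotopic_pathin_assoc[OF ub pathin_reverse[OF v] vbw] e by simp
  have 2: "homotopic_pathin X (path_join (path_reverse v) (path_join (path_join v \<beta>') (path_reverse w)))
              (path_join (path_join (path_reverse v) (path_join v \<beta>')) (path_reverse w))"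
    using homotopic_pathin_sym[OF homotopic_pathin_assoc[OF pathin_reverse[OF v] vb pathin_reverse[OF w]]] e by simp
  have 3: "homotopic_pathin X (path_join (path_join (path_reverse v) (path_join v \<beta>')) (path_reverse w))
              (path_join \<beta>' (path_reverse w))"
    using homotopic_pathin_join_left[OF homotopic_pathin_cancel_left[OF v b'] pathin_reverse[OF w]] e by simp
  have 4: "homotopic_pathin X (path_join (path_join u \<beta>) (path_join (path_reverse v) (path_join (path_join v \<beta>') (path_reverse w))))
              (path_join (path_join u \<beta>) (path_join \<beta>' (path_reverse w)))"
    using homotopic_pathin_join_right[OF homotopic_pathin_trans[OF 2 3] ub] e by simp
  have 5: "homotopic_pathin X (path_join (path_join u \<beta>) (path_join \<beta>' (path_reverse w)))
              (path_join (path_join (path_join u \<beta>) \<beta>') (path_reverse w))"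
    using homotopic_pathin_sym[OF homotopic_pathin_assoc[OF ub b' pathin_reverse[OF w]]] e by simp
  have 6: "homotopic_pathin X (path_join (path_join (path_join u \<beta>) \<beta>') (path_reverse w))
              (lasso u (path_join \<beta> \<beta>') w)"
    unfolding lasso_def using homotopic_pathin_join_left[OF homotopic_pathin_assoc[OF u b b'] pathin_reverse[OF w]] e by simp
  have L: "homotopic_pathin X (path_join (lasso u \<beta> v) (lasso v \<beta>' w)) (lasso u (path_join \<beta> \<beta>') w)"
    using homotopic_pathin_trans[OF 1 homotopic_pathin_trans[OF 4 homotopic_pathin_trans[OF 5 6]]] .
  have l1: "lasso u \<beta> v \<in> loops X x0" by (rule lasso_in_loops[OF u b v]) (use e in auto)
  have l2: "lasso v \<beta>' w \<in> loops X x0" by (rule lasso_in_loops[OF v b' w]) (use e in auto)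
  have l3: "lasso u (path_join \<beta> \<beta>') w \<in> loops X x0" by (rule lasso_in_loops[OF u bb w]) (use e in auto)
  show ?thesis
    using fundamental_group_mult[OF l1 l2] loop_class_eq_iff[OF loops_join[OF l1 l2] l3] L by simp
qed

lemma lasso_eq_one:
  assumes u: "pathin X u" and b: "pathin X \<beta>" and v: "pathin X v"
    and e: "u 0 = x0" "v 0 = x0" "u 1 = \<beta> 0" "\<beta> 1 = v 1" and h: "homotopic_pathin X (path_join u \<beta>) v"
  shows "loop_class X x0 (lasso u \<beta> v) = \<one>\<^bsub>fundamental_group X x0\<^esub>"
proof -
  have "homotopic_pathin X (lasso u \<beta> v) (path_join v (path_reverse v))"
    unfolding lasso_def using homotopic_pathin_join_left[OF h pathin_reverse[OF v]] e by simp
  moreover have "homotopic_pathin X (path_join v (path_reverse v)) (\<lambda>t. x0)"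
    using homotopic_pathin_rinv[OF v] e by simp
  ultimately have "homotopic_pathin X (lasso u \<beta> v) (\<lambda>t. x0)" using homotopic_pathin_trans by blast
  moreover have "lasso u \<beta> v \<in> loops X x0" by (rule lasso_in_loops[OF u b v]) (use e in auto)
  moreover have "(\<lambda>t. x0) \<in> loops X x0"
    using e path_start_in_topspace[OF u] by (auto simp: loops_def)
  ultimately show ?thesis by (simp add: fundamental_group_one loop_class_eq_iff)
qed

lemma lasso_const:
  assumes p: "p \<in> loops X x0"
  shows "loop_class X x0 (lasso p (\<lambda>t. x0) (\<lambda>t. x0)) = loop_class X x0 p"
proof -
  have pp: "pathin X p" "p 0 = x0" "p 1 = x0" using loopsD[OF p] by auto
  have r: "path_reverse (\<lambda>t. x0) = (\<lambda>t. x0)" by (simp add: path_reverse_def)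
  have "homotopic_pathin X (path_join p (\<lambda>t. x0)) p" using homotopic_pathin_runit[OF pp(1)] pp by simp
  moreover have "homotopic_pathin X (path_join (path_join p (\<lambda>t. x0)) (\<lambda>t. x0)) (path_join p (\<lambda>t. x0))"
    using homotopic_pathin_runit[OF pathin_join[OF pp(1), of "\<lambda>t. x0"]] pp path_start_in_topspace[OF pp(1)] by simp
  ultimately have "homotopic_pathin X (lasso p (\<lambda>t. x0) (\<lambda>t. x0)) p" unfolding lasso_def r using homotopic_pathin_trans by blast
  moreover have "lasso p (\<lambda>t. x0) (\<lambda>t. x0) \<in> loops X x0"
    by (rule lasso_in_loops) (use pp path_start_in_topspace[OF pp(1)] in auto)
  ultimately show ?thesis using loop_class_eq_iff[of "lasso p (\<lambda>t. x0) (\<lambda>t. x0)" X x0 p] p by blast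
qed

lemma loop_class_eq_lasso_mult:
  assumes x0: "x0 \<in> topspace X" and p: "p \<in> loops X x0" and g: "g \<in> loops X x0"
  shows "loop_class X x0 g
       = loop_class X x0 (lasso g (\<lambda>_. x0) p) \<otimes>\<^bsub>fundamental_group X x0\<^esub> loop_class X x0 p"
proof -
  let ?c = "\<lambda>_::real. x0"
  have "loop_class X x0 (lasso g ?c p) \<otimes>\<^bsub>fundamental_group X x0\<^esub> loop_class X x0 (lasso p ?c ?c)
      = loop_class X x0 (lasso g (path_join ?c ?c) ?c)"
    by (rule lasso_mult) (use p g x0 in \<open>auto simp: loops_def\<close>)
  moreover have "path_join ?c ?c = ?c"
    by (simp add: path_join_def)
  ultimately show ?thesis
    using lasso_const[OF p] lasso_const[OF g] by simp
qed

lemma lasso_reverse: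
  assumes x0: "x0 \<in> topspace X"
    and paths: "pathin X a" "pathin X d" "pathin X b"
    and ends: "a 0 = x0" "b 0 = x0" "d 0 = a 1" "d 1 = b 1"
  shows "loop_class X x0 (lasso b (path_reverse d) a)
       = inv\<^bsub>fundamental_group X x0\<^esub> loop_class X x0 (lasso a d b)"
proof -
  let ?G = "fundamental_group X x0"
  interpret G: group ?G by (rule group_fundamental_group[OF x0])
  have "homotopic_pathin X (path_join a (path_join d (path_reverse d))) (path_join a (\<lambda>t. a 1))"
    using homotopic_pathin_join_right[OF homotopic_pathin_rinv[OF paths(2)] paths(1)] ends by simp
  then have "homotopic_pathin X (path_join a (path_join d (path_reverse d))) a"
    using homotopic_pathin_runit[OF paths(1)] homotopic_pathin_trans by blast
  moreover have "pathin X (path_join d (path_reverse d))"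
    using paths by (intro pathin_join pathin_reverse) auto
  ultimately have "loop_class X x0 (lasso a (path_join d (path_reverse d)) a) = \<one>\<^bsub>?G\<^esub>"
    by (intro lasso_eq_one) (use paths ends in auto)
  moreover have "loop_class X x0 (lasso a d b) \<otimes>\<^bsub>?G\<^esub> loop_class X x0 (lasso b (path_reverse d) a)
      = loop_class X x0 (lasso a (path_join d (path_reverse d)) a)"
    by (rule lasso_mult) (use paths ends in \<open>auto intro: pathin_reverse\<close>)
  moreover have A: "loop_class X x0 (lasso a d b) \<in> carrier ?G"
    and E: "loop_class X x0 (lasso b (path_reverse d) a) \<in> carrier ?G"
    by (intro loop_class_in_carrier lasso_in_loops; use paths ends in \<open>auto intro: pathin_reverse\<close>)+
  ultimately have "inv\<^bsub>?G\<^esub> loop_class X x0 (lasso b (path_reverse d) a) = loop_class X x0 (lasso a d b)"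
    by (intro G.inv_equality) simp_all
  then show ?thesis
    using G.inv_inv[OF E] by simp
qed

text \<open>The right-hand side is \<open>b d\<inverse> a\<inverse> \<cdot> c \<sigma> d \<gamma> d'\<inverse> \<tau> c\<inverse>\<close>, which telescopes by
  \<open>c \<sigma> \<simeq> a\<close>, \<open>b \<gamma> \<simeq> b'\<close> and \<open>\<tau> c\<inverse> \<simeq> a'\<inverse>\<close>.\<close>

lemma lasso_rung_eq:
  assumes x0: "x0 \<in> topspace X"
    and paths: "pathin X a" "pathin X b" "pathin X a'" "pathin X b'" "pathin X c"
      "pathin X d" "pathin X d'" "pathin X \<sigma>" "pathin X \<gamma>" "pathin X \<tau>"
    and starts: "a 0 = x0" "b 0 = x0" "a' 0 = x0" "b' 0 = x0" "c 0 = x0"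
    and ends: "\<sigma> 0 = c 1" "\<sigma> 1 = a 1" "d 0 = a 1" "d 1 = b 1" "\<gamma> 0 = b 1" "\<gamma> 1 = b' 1"
      "d' 0 = a' 1" "d' 1 = b' 1" "\<tau> 0 = a' 1" "\<tau> 1 = c 1"
    and homs: "homotopic_pathin X (path_join c \<sigma>) a" "homotopic_pathin X (path_join b \<gamma>) b'"
      "homotopic_pathin X (path_join a' \<tau>) c"
  shows "loop_class X x0 (lasso b' (path_reverse d') a')
       = loop_class X x0 (lasso b (path_reverse d) a) \<otimes>\<^bsub>fundamental_group X x0\<^esub>
         loop_class X x0 (lasso c (path_join (path_join (path_join (path_join \<sigma> d) \<gamma>) (path_reverse d')) \<tau>) c)"
proof -
  let ?G = "fundamental_group X x0"
  interpret G: group ?G by (rule group_fundamental_group[OF x0])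
  let ?\<beta>1 = "path_join \<sigma> d"
  let ?\<beta>2 = "path_join ?\<beta>1 \<gamma>"
  let ?\<beta>3 = "path_join ?\<beta>2 (path_reverse d')"
  define A where "A = loop_class X x0 (lasso a d b)"
  define A' where "A' = loop_class X x0 (lasso b' (path_reverse d') a')"
  have \<beta>: "pathin X ?\<beta>1" "pathin X ?\<beta>2" "pathin X ?\<beta>3" "pathin X (path_reverse d')"
    using paths ends by (auto intro!: pathin_join pathin_reverse)
  have carrier: "A \<in> carrier ?G" "A' \<in> carrier ?G"
    unfolding A_def A'_def
    by (intro loop_class_in_carrier lasso_in_loops; use paths starts ends \<beta> in auto)+
  have trivial: "loop_class X x0 (lasso c \<sigma> a) = \<one>\<^bsub>?G\<^esub>" "loop_class X x0 (lasso b \<gamma> b') = \<one>\<^bsub>?G\<^esub>"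
    "loop_class X x0 (lasso a' \<tau> c) = \<one>\<^bsub>?G\<^esub>"
    by (intro lasso_eq_one; use paths starts ends homs in auto)+
  have "loop_class X x0 (lasso c \<sigma> a) \<otimes>\<^bsub>?G\<^esub> A = loop_class X x0 (lasso c ?\<beta>1 b)"
    unfolding A_def by (rule lasso_mult) (use paths starts ends in auto)
  then have 1: "loop_class X x0 (lasso c ?\<beta>1 b) = A"
    using trivial carrier by simp
  have "loop_class X x0 (lasso c ?\<beta>1 b) \<otimes>\<^bsub>?G\<^esub> loop_class X x0 (lasso b \<gamma> b')
      = loop_class X x0 (lasso c ?\<beta>2 b')"
    by (rule lasso_mult) (use paths starts ends \<beta> in auto)
  then have 2: "loop_class X x0 (lasso c ?\<beta>2 b') = A"
    using 1 trivial carrier by simp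
  have "loop_class X x0 (lasso c ?\<beta>2 b') \<otimes>\<^bsub>?G\<^esub> A' = loop_class X x0 (lasso c ?\<beta>3 a')"
    unfolding A'_def by (rule lasso_mult) (use paths starts ends \<beta> in auto)
  then have 3: "loop_class X x0 (lasso c ?\<beta>3 a') = A \<otimes>\<^bsub>?G\<^esub> A'"
    using 2 by simp
  have "loop_class X x0 (lasso c ?\<beta>3 a') \<otimes>\<^bsub>?G\<^esub> loop_class X x0 (lasso a' \<tau> c)
      = loop_class X x0 (lasso c (path_join ?\<beta>3 \<tau>) c)"
    by (rule lasso_mult) (use paths starts ends \<beta> in auto)
  then have "loop_class X x0 (lasso c (path_join ?\<beta>3 \<tau>) c) = A \<otimes>\<^bsub>?G\<^esub> A'"
    using 3 trivial carrier by simp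
  moreover have "loop_class X x0 (lasso b (path_reverse d) a) = inv\<^bsub>?G\<^esub> A"
    unfolding A_def by (rule lasso_reverse) (use x0 paths starts ends in auto)
  ultimately show ?thesis
    using carrier by (simp add: A'_def[symmetric] G.m_assoc[symmetric])
qed

section \<open>The topology of the loop space\<close>

lemma openin_pi1_qtop:
  "openin (pi1_qtop X x0) V \<longleftrightarrow> V \<subseteq> carrier (fundamental_group X x0) \<and>
      openin (loop_space_top X x0) {p \<in> loops X x0. loop_class X x0 p \<in> V}"
proof -
  let ?P = "\<lambda>V. V \<subseteq> carrier (fundamental_group X x0) \<and>
      openin (loop_space_top X x0) {p \<in> loops X x0. loop_class X x0 p \<in> V}"
  have 1: "?P (S \<inter> T)" if "?P S" "?P T" for S T
  proof -
    have "{p \<in> loops X x0. loop_class X x0 p \<in> S \<inter> T} =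
       {p \<in> loops X x0. loop_class X x0 p \<in> S} \<inter> {p \<in> loops X x0. loop_class X x0 p \<in> T}" by auto
    then show ?thesis using that by auto
  qed
  have 2: "?P (\<Union>K)" if K: "\<forall>S\<in>K. ?P S" for K
  proof -
    have "{p \<in> loops X x0. loop_class X x0 p \<in> \<Union>K} = \<Union>((\<lambda>S. {p \<in> loops X x0. loop_class X x0 p \<in> S}) ` K)" by auto
    moreover have "openin (loop_space_top X x0) (\<Union>((\<lambda>S. {p \<in> loops X x0. loop_class X x0 p \<in> S}) ` K))"
      using K by (intro openin_Union) auto
    ultimately show ?thesis using K by auto
  qed
  have "istopology ?P"
    unfolding istopology_def using 1 2 by blast
  then show ?thesis unfolding pi1_qtop_def by simp
qed

lemma openin_loop_space_top_subbasic:
  assumes "compactin (top_of_set {0..1}) C" "openin X U"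
  shows "openin (loop_space_top X x0) {g \<in> loops X x0. g ` C \<subseteq> U}"
  unfolding loop_space_top_def openin_topology_generated_by_iff
  by (rule generate_topology_on.Basis) (use assms in \<open>auto simp: compact_open_subbasis_def\<close>)

lemma openin_loop_space_top_loops: "openin (loop_space_top X x0) (loops X x0)"
  using openin_loop_space_top_subbasic[of "{}" X "{}" x0] by simp

lemma compact_open_nbhd_base:
  assumes "generate_topology_on (compact_open_subbasis X x0) P" "f \<in> P"
  shows "\<exists>\<F>. finite \<F> \<and> (\<forall>(C, U) \<in> \<F>. compactin (top_of_set {0..1}) C \<and> openin X U \<and> f ` C \<subseteq> U) \<and>
    {g \<in> loops X x0. \<forall>(C, U) \<in> \<F>. g ` C \<subseteq> U} \<subseteq> P"
  using assms
proof (induction arbitrary: f rule: generate_topology_on.induct)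
  case Empty
  then show ?case by simp
next
  case (Int a b)
  obtain \<F>1 where F1: "finite \<F>1" "\<forall>(C, U) \<in> \<F>1. compactin (top_of_set {0..1}) C \<and> openin X U \<and> f ` C \<subseteq> U"
    "{g \<in> loops X x0. \<forall>(C, U) \<in> \<F>1. g ` C \<subseteq> U} \<subseteq> a"
    using Int.IH(1)[of f] Int.prems by blast
  obtain \<F>2 where F2: "finite \<F>2" "\<forall>(C, U) \<in> \<F>2. compactin (top_of_set {0..1}) C \<and> openin X U \<and> f ` C \<subseteq> U"
    "{g \<in> loops X x0. \<forall>(C, U) \<in> \<F>2. g ` C \<subseteq> U} \<subseteq> b"
    using Int.IH(2)[of f] Int.prems by blast
  show ?case
  proof (intro exI[where x="\<F>1 \<union> \<F>2"] conjI)
    show "finite (\<F>1 \<union> \<F>2)"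
      using F1(1) F2(1) by simp
    show "\<forall>(C, U) \<in> \<F>1 \<union> \<F>2. compactin (top_of_set {0..1}) C \<and> openin X U \<and> f ` C \<subseteq> U"
      unfolding ball_Un using F1(2) F2(2) by (intro conjI)
    show "{g \<in> loops X x0. \<forall>(C, U) \<in> \<F>1 \<union> \<F>2. g ` C \<subseteq> U} \<subseteq> a \<inter> b"
      unfolding ball_Un using F1(3) F2(3) by blast
  qed
next
  case (UN K)
  then obtain k where k: "k \<in> K" "f \<in> k"
    by blast
  obtain \<F> where F: "finite \<F>" "\<forall>(C, U) \<in> \<F>. compactin (top_of_set {0..1}) C \<and> openin X U \<and> f ` C \<subseteq> U"
    "{g \<in> loops X x0. \<forall>(C, U) \<in> \<F>. g ` C \<subseteq> U} \<subseteq> k"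
    using UN.IH[OF k] by blast
  show ?case
  proof (intro exI[where x=\<F>] conjI)
    show "{g \<in> loops X x0. \<forall>(C, U) \<in> \<F>. g ` C \<subseteq> U} \<subseteq> \<Union>K"
      using F(3) k(1) by blast
  qed (use F(1,2) in simp_all)
next
  case (Basis s)
  then obtain C U where s: "s = {g \<in> loops X x0. g ` C \<subseteq> U}" "compactin (top_of_set {0..1}) C" "openin X U"
    unfolding compact_open_subbasis_def by blast
  show ?case
  proof (intro exI[where x="{(C, U)}"] conjI)
    show "\<forall>(C', U') \<in> {(C, U)}. compactin (top_of_set {0..1}) C' \<and> openin X U' \<and> f ` C' \<subseteq> U'"
      using s Basis.prems by simp
    show "{g \<in> loops X x0. \<forall>(C', U') \<in> {(C, U)}. g ` C' \<subseteq> U'} \<subseteq> s"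
      using s(1) by simp
  qed simp
qed

lemma loop_space_top_nbhd_base:
  assumes "openin (loop_space_top X x0) P" "f \<in> P"
  obtains \<F> where "finite \<F>"
    "\<And>C U. (C, U) \<in> \<F> \<Longrightarrow> compactin (top_of_set {0..1}) C \<and> openin X U \<and> f ` C \<subseteq> U"
    "{g \<in> loops X x0. \<forall>(C, U) \<in> \<F>. g ` C \<subseteq> U} \<subseteq> P"
proof -
  have "generate_topology_on (compact_open_subbasis X x0) P"
    using assms(1) unfolding loop_space_top_def openin_topology_generated_by_iff .
  from compact_open_nbhd_base[OF this assms(2)] obtain \<F> where \<F>: "finite \<F>"
    "\<forall>(C, U) \<in> \<F>. compactin (top_of_set {0..1}) C \<and> openin X U \<and> f ` C \<subseteq> U"
    "{g \<in> loops X x0. \<forall>(C, U) \<in> \<F>. g ` C \<subseteq> U} \<subseteq> P"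
    by blast
  show ?thesis
  proof (rule that)
    show "compactin (top_of_set {0..1}) C \<and> openin X U \<and> f ` C \<subseteq> U" if "(C, U) \<in> \<F>" for C U
      using \<F>(2) that by blast
  qed (use \<F> in auto)
qed

lemma topspace_loop_space_top: "topspace (loop_space_top X x0) = loops X x0"
proof
  show "topspace (loop_space_top X x0) \<subseteq> loops X x0"
    unfolding loop_space_top_def topology_generated_by_topspace compact_open_subbasis_def by blast
  show "loops X x0 \<subseteq> topspace (loop_space_top X x0)"
    using openin_subset[OF openin_loop_space_top_loops] .
qed

lemma openin_loop_space_top_finite_Inter:
  assumes "finite \<F>" "\<And>C U. (C, U) \<in> \<F> \<Longrightarrow> compactin (top_of_set {0..1}) C \<and> openin X U"
  shows "openin (loop_space_top X x0) {g \<in> loops X x0. \<forall>(C, U) \<in> \<F>. g ` C \<subseteq> U}"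
proof -
  have "openin (loop_space_top X x0) {g \<in> loops X x0. g ` fst CU \<subseteq> snd CU}" if "CU \<in> \<F>" for CU
    using assms(2)[of "fst CU" "snd CU"] that by (intro openin_loop_space_top_subbasic) auto
  then have "openin (loop_space_top X x0)
      ((\<Inter>CU\<in>\<F>. {g \<in> loops X x0. g ` fst CU \<subseteq> snd CU}) \<inter> topspace (loop_space_top X x0))"
    by (rule openin_INT[OF assms(1)])
  moreover have "(\<Inter>CU\<in>\<F>. {g \<in> loops X x0. g ` fst CU \<subseteq> snd CU}) \<inter> topspace (loop_space_top X x0)
      = {g \<in> loops X x0. \<forall>(C, U) \<in> \<F>. g ` C \<subseteq> U}"
    unfolding topspace_loop_space_top case_prod_beta by blast
  ultimately show ?thesis
    by simp
qed

lemma openin_loop_space_top_subdivision: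
  assumes t: "\<And>k. k \<le> n \<Longrightarrow> t k \<in> {0..1}"
    and U: "\<And>k. k < n \<Longrightarrow> openin X (U k)" and W: "\<And>k. k \<le> n \<Longrightarrow> openin X (W k)"
  shows "openin (loop_space_top X x0)
    {g \<in> loops X x0. (\<forall>k<n. g ` {t k..t (Suc k)} \<subseteq> U k) \<and> (\<forall>k\<le>n. g (t k) \<in> W k)}"
proof -
  define \<N> where "\<N> = (\<lambda>k. ({t k..t (Suc k)}, U k)) ` {..<n} \<union> (\<lambda>k. ({t k}, W k)) ` {..n}"
  have "openin (loop_space_top X x0) {g \<in> loops X x0. \<forall>(C, V) \<in> \<N>. g ` C \<subseteq> V}"
  proof (rule openin_loop_space_top_finite_Inter)
    show "finite \<N>"
      by (simp add: \<N>_def)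
    show "compactin (top_of_set {0..1}) C \<and> openin X V" if "(C, V) \<in> \<N>" for C V
    proof -
      have "(C, V) \<in> (\<lambda>k. ({t k..t (Suc k)}, U k)) ` {..<n} \<or> (C, V) \<in> (\<lambda>k. ({t k}, W k)) ` {..n}"
        using that unfolding \<N>_def by blast
      then show ?thesis
      proof
        assume "(C, V) \<in> (\<lambda>k. ({t k..t (Suc k)}, U k)) ` {..<n}"
        then obtain k where k: "k < n" "C = {t k..t (Suc k)}" "V = U k"
          by auto
        then have "{t k..t (Suc k)} \<subseteq> {0..1}"
          using t[of k] t[of "Suc k"] by auto
        then show ?thesis
          using k U[OF k(1)] by (simp add: compactin_subtopology)
      next
        assume "(C, V) \<in> (\<lambda>k. ({t k}, W k)) ` {..n}"
        then obtain k where k: "k \<le> n" "C = {t k}" "V = W k"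
          by auto
        then show ?thesis
          using t[OF k(1)] W[OF k(1)] by (simp add: compactin_subtopology)
      qed
    qed
  qed
  moreover have "{g \<in> loops X x0. \<forall>(C, V) \<in> \<N>. g ` C \<subseteq> V}
      \<subseteq> {g \<in> loops X x0. (\<forall>k<n. g ` {t k..t (Suc k)} \<subseteq> U k) \<and> (\<forall>k\<le>n. g (t k) \<in> W k)}"
    unfolding \<N>_def by blast
  moreover have "{g \<in> loops X x0. (\<forall>k<n. g ` {t k..t (Suc k)} \<subseteq> U k) \<and> (\<forall>k\<le>n. g (t k) \<in> W k)}
      \<subseteq> {g \<in> loops X x0. \<forall>(C, V) \<in> \<N>. g ` C \<subseteq> V}"
    unfolding \<N>_def by auto
  ultimately show ?thesis
    by (metis (no_types, lifting) subset_antisym)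
qed

definition lasso_nbhd :: "'a topology \<Rightarrow> 'a \<Rightarrow> ((real \<Rightarrow> 'a) set) set \<Rightarrow> (real \<Rightarrow> 'a) \<Rightarrow> 'a set \<Rightarrow> bool"
  where "lasso_nbhd X x0 H \<alpha> U \<longleftrightarrow> openin X U \<and> \<alpha> 1 \<in> U \<and>
    (\<forall>\<gamma>. pathin (subtopology X U) \<gamma> \<and> \<gamma> 0 = \<alpha> 1 \<and> \<gamma> 1 = \<alpha> 1 \<longrightarrow> loop_class X x0 (lasso \<alpha> \<gamma> \<alpha>) \<in> H)"

text \<open>The two lassos differ only on \<open>]1/4, 1/2]\<close>, where the loop in the middle is traversed.\<close>

lemma lasso_image_subset:
  assumes c: "lasso \<alpha> (\<lambda>_. \<alpha> 1) \<alpha> ` C \<subseteq> V" and \<gamma>: "\<alpha> 1 \<in> V \<Longrightarrow> \<gamma> ` {0..1} \<subseteq> V"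
  shows "lasso \<alpha> \<gamma> \<alpha> ` C \<subseteq> V"
proof
  fix y assume "y \<in> lasso \<alpha> \<gamma> \<alpha> ` C"
  then obtain t where t: "t \<in> C" "y = lasso \<alpha> \<gamma> \<alpha> t"
    by blast
  have c_in: "lasso \<alpha> (\<lambda>_. \<alpha> 1) \<alpha> t \<in> V"
    using c t(1) by blast
  show "y \<in> V"
  proof (cases "t \<le> 1/2 \<and> \<not> 2 * t \<le> 1/2")
    case True
    then have "\<alpha> 1 \<in> V"
      using c_in by (simp add: lasso_def path_join_def)
    moreover have "2 * (2 * t) - 1 \<in> {0..1}"
      using True by auto
    ultimately have "\<gamma> (2 * (2 * t) - 1) \<in> V"
      using \<gamma> by blast
    then show ?thesis
      using True t(2) by (simp add: lasso_def path_join_def)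
  next
    case False
    then have "lasso \<alpha> \<gamma> \<alpha> t = lasso \<alpha> (\<lambda>_. \<alpha> 1) \<alpha> t"
      by (auto simp: lasso_def path_join_def)
    then show ?thesis
      using c_in t(2) by simp
  qed
qed

text \<open>The lasso around the constant loop at \<open>\<alpha> 1\<close> has a basic neighbourhood inside the open
  preimage of \<open>H\<close>; the open sets of that neighbourhood containing \<open>\<alpha> 1\<close> cut out the lasso
  neighbourhood.\<close>

lemma lasso_nbhd_if_openin_pi1_qtop:
  assumes H: "openin (pi1_qtop X x0) H" "\<one>\<^bsub>fundamental_group X x0\<^esub> \<in> H"
    and \<alpha>: "pathin X \<alpha>" "\<alpha> 0 = x0"
  shows "\<exists>U. lasso_nbhd X x0 H \<alpha> U"
proof -
  define P where "P = {p \<in> loops X x0. loop_class X x0 p \<in> H}"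
  define c where "c = (\<lambda>t::real. \<alpha> 1)"
  have P: "openin (loop_space_top X x0) P"
    using H(1) by (simp add: openin_pi1_qtop P_def)
  have \<alpha>1: "\<alpha> 1 \<in> topspace X"
    using path_finish_in_topspace[OF \<alpha>(1)] .
  have c: "pathin X c"
    using \<alpha>1 by (simp add: c_def)
  have "loop_class X x0 (lasso \<alpha> c \<alpha>) = \<one>\<^bsub>fundamental_group X x0\<^esub>"
    by (rule lasso_eq_one[OF \<alpha>(1) c \<alpha>(1)])
      (use \<alpha> homotopic_pathin_runit[OF \<alpha>(1)] in \<open>auto simp: c_def\<close>)
  moreover have "lasso \<alpha> c \<alpha> \<in> loops X x0"
    by (rule lasso_in_loops[OF \<alpha>(1) c \<alpha>(1)]) (use \<alpha> in \<open>auto simp: c_def\<close>)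
  ultimately have c_in_P: "lasso \<alpha> c \<alpha> \<in> P"
    using H(2) by (simp add: P_def)
  obtain \<F> where \<F>: "finite \<F>"
    "\<And>C V. (C, V) \<in> \<F> \<Longrightarrow> compactin (top_of_set {0..1}) C \<and> openin X V \<and> lasso \<alpha> c \<alpha> ` C \<subseteq> V"
    "{g \<in> loops X x0. \<forall>(C, V) \<in> \<F>. g ` C \<subseteq> V} \<subseteq> P"
    by (rule loop_space_top_nbhd_base[OF P c_in_P]) auto
  define I where "I = {CV \<in> \<F>. \<alpha> 1 \<in> snd CV}"
  define U where "U = (\<Inter>CV\<in>I. snd CV) \<inter> topspace X"
  have "finite I"
    using \<F>(1) by (simp add: I_def)
  moreover have "openin X (snd CV)" if "CV \<in> I" for CV
    using \<F>(2)[of "fst CV" "snd CV"] that by (simp add: I_def)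
  ultimately have "openin X U"
    unfolding U_def by (rule openin_INT)
  moreover have "\<alpha> 1 \<in> U"
    using \<alpha>1 by (auto simp: U_def I_def)
  moreover have "loop_class X x0 (lasso \<alpha> \<gamma> \<alpha>) \<in> H"
    if \<gamma>: "pathin (subtopology X U) \<gamma>" "\<gamma> 0 = \<alpha> 1" "\<gamma> 1 = \<alpha> 1" for \<gamma>
  proof -
    have \<gamma>X: "pathin X \<gamma>" and \<gamma>U: "\<And>x. x \<in> {0..1} \<Longrightarrow> \<gamma> x \<in> U"
      using \<gamma>(1) unfolding pathin_subtopology by auto
    have "lasso \<alpha> \<gamma> \<alpha> ` C \<subseteq> V" if CV: "(C, V) \<in> \<F>" for C V
    proof (rule lasso_image_subset)
      show "lasso \<alpha> (\<lambda>_. \<alpha> 1) \<alpha> ` C \<subseteq> V"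
        using \<F>(2)[OF CV] by (simp add: c_def)
      show "\<gamma> ` {0..1} \<subseteq> V" if "\<alpha> 1 \<in> V"
      proof -
        have "(C, V) \<in> I"
          using CV that by (simp add: I_def)
        then have "U \<subseteq> V"
          unfolding U_def by auto
        then show ?thesis
          using \<gamma>U by auto
      qed
    qed
    moreover have "lasso \<alpha> \<gamma> \<alpha> \<in> loops X x0"
      by (rule lasso_in_loops[OF \<alpha>(1) \<gamma>X \<alpha>(1)]) (use \<alpha> \<gamma> in auto)
    ultimately have "lasso \<alpha> \<gamma> \<alpha> \<in> P"
      using \<F>(3) by blast
    then show ?thesis
      by (simp add: P_def)
  qed
  ultimately show ?thesis
    unfolding lasso_nbhd_def by blast
qed

section \<open>Loops close to a loop in the preimage of \<open>H\<close>\<close>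

lemma lasso_nbhd_along_loop:
  assumes lasso_nbhds: "\<And>\<alpha>. pathin X \<alpha> \<Longrightarrow> \<alpha> 0 = x0 \<Longrightarrow> \<exists>U. lasso_nbhd X x0 H \<alpha> U"
    and p: "p \<in> loops X x0" and s: "s \<in> {0..1}"
  shows "\<exists>U r. lasso_nbhd X x0 H (subpathin p 0 s) U \<and> r > 0 \<and> (\<forall>t\<in>{0..1}. dist t s < r \<longrightarrow> p t \<in> U)"
proof -
  have pp: "pathin X p" "p 0 = x0"
    using loopsD[OF p] by auto
  have ps: "pathin X (subpathin p 0 s)"
    using pathin_subpathin[OF pp(1)] s by auto
  obtain U where U: "lasso_nbhd X x0 H (subpathin p 0 s) U"
    using lasso_nbhds[OF ps] pp(2) by auto
  then have oU: "openin X U" and sU: "p s \<in> U"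
    by (auto simp: lasso_nbhd_def)
  have "openin (top_of_set {0..1}) {t \<in> topspace (top_of_set {0..1}). p t \<in> U}"
    using openin_continuous_map_preimage[OF pp(1)[unfolded pathin_def] oU] .
  then have "openin (top_of_set {0..1}) {t \<in> {0..1::real}. p t \<in> U}"
    by simp
  then obtain r where "r > 0" "\<forall>t\<in>{0..1}. dist t s < r \<longrightarrow> t \<in> {t \<in> {0..1::real}. p t \<in> U}"
    unfolding openin_euclidean_subtopology_iff using s sU by blast
  then show ?thesis
    using U by blast
qed

lemma dist_lt_if_between:
  fixes a b s y r :: real
  assumes "dist a s < r" "dist b s < r" "min s a \<le> y" "y \<le> max s b"
  shows "dist y s < r"
  using assms unfolding dist_real_def min_le_iff_disj le_max_iff_disj abs_less_iff by auto

lemma unit_interval_subdivision: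
  fixes r :: "real \<Rightarrow> real"
  assumes r: "\<And>s. s \<in> {0..1} \<Longrightarrow> r s > 0"
  obtains n :: nat where "n > 0"
    "\<And>k. k < n \<Longrightarrow> \<exists>s\<in>{0..1}. {real k / real n..real (Suc k) / real n} \<subseteq> ball s (r s)"
proof -
  obtain \<delta> where \<delta>: "0 < \<delta>"
    "\<And>T. T \<subseteq> {0..1} \<Longrightarrow> diameter T < \<delta> \<Longrightarrow> \<exists>B \<in> (\<lambda>s. ball s (r s)) ` {0..1::real}. T \<subseteq> B"
  proof (rule Lebesgue_number_lemma[of "{0..1::real}" "(\<lambda>s. ball s (r s)) ` {0..1}"])
    show "{0..1::real} \<subseteq> \<Union>((\<lambda>s. ball s (r s)) ` {0..1})"
      using r by force
  qed auto
  obtain m where "inverse (real (Suc m)) < \<delta>"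
    using reals_Archimedean[OF \<delta>(1)] by blast
  define n where "n = Suc m"
  have n: "n > 0" "1 / real n < \<delta>"
    using \<open>inverse (real (Suc m)) < \<delta>\<close> by (simp_all add: n_def divide_inverse)
  define t where "t k = real k / real n" for k
  have balls: "\<exists>s\<in>{0..1}. {t k..t (Suc k)} \<subseteq> ball s (r s)" if "k < n" for k
  proof -
    have "{t k..t (Suc k)} \<subseteq> {0..1}"
      using that n(1) by (auto simp: t_def divide_le_eq_1)
    moreover have "diameter {t k..t (Suc k)} < \<delta>"
    proof -
      have "t (Suc k) - t k = 1 / real n" "t k \<le> t (Suc k)"
        by (simp_all add: t_def diff_divide_distrib[symmetric] divide_right_mono)
      then show ?thesis
        using n(2) by simp
    qed
    ultimately show ?thesis
      using \<delta>(2) by blast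
  qed
  show ?thesis
  proof (rule that[OF n(1)])
    fix k assume "k < n"
    then show "\<exists>s\<in>{0..1}. {real k / real n..real (Suc k) / real n} \<subseteq> ball s (r s)"
      using balls by (simp add: t_def)
  qed
qed

lemma lasso_nbhd_subdivision:
  assumes lasso_nbhds: "\<And>\<alpha>. pathin X \<alpha> \<Longrightarrow> \<alpha> 0 = x0 \<Longrightarrow> \<exists>U. lasso_nbhd X x0 H \<alpha> U"
    and p: "p \<in> loops X x0"
  obtains n :: nat and s :: "nat \<Rightarrow> real" and U :: "nat \<Rightarrow> 'a set"
  where "n > 0"
    "\<And>k. k < n \<Longrightarrow> s k \<in> {0..1} \<and> lasso_nbhd X x0 H (subpathin p 0 (s k)) (U k) \<and>
       p ` {min (s k) (real k / real n)..max (s k) (real (Suc k) / real n)} \<subseteq> U k"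
proof -
  have "\<forall>s\<in>{0..1}. \<exists>V r. lasso_nbhd X x0 H (subpathin p 0 s) V \<and> r > 0 \<and>
      (\<forall>t\<in>{0..1}. dist t s < r \<longrightarrow> p t \<in> V)"
    using lasso_nbhd_along_loop[OF lasso_nbhds p] by blast
  then obtain V where "\<forall>s\<in>{0..1}. \<exists>r. lasso_nbhd X x0 H (subpathin p 0 s) (V s) \<and> r > 0 \<and>
      (\<forall>t\<in>{0..1}. dist t s < r \<longrightarrow> p t \<in> V s)"
    by (rule bchoice[elim_format]) blast
  then obtain r where "\<forall>s\<in>{0..1}. lasso_nbhd X x0 H (subpathin p 0 s) (V s) \<and> r s > 0 \<and>
      (\<forall>t\<in>{0..1}. dist t s < r s \<longrightarrow> p t \<in> V s)"
    by (rule bchoice[elim_format]) blast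
  then have Vr: "\<And>s. s \<in> {0..1} \<Longrightarrow> lasso_nbhd X x0 H (subpathin p 0 s) (V s) \<and>
      r s > 0 \<and> (\<forall>t\<in>{0..1}. dist t s < r s \<longrightarrow> p t \<in> V s)"
    by blast
  obtain n where n: "n > 0"
    and balls: "\<And>k. k < n \<Longrightarrow> \<exists>s\<in>{0..1}. {real k / real n..real (Suc k) / real n} \<subseteq> ball s (r s)"
    by (rule unit_interval_subdivision[of r]) (use Vr in auto)
  define t where "t k = real k / real n" for k
  obtain s where s: "\<And>k. k < n \<Longrightarrow> s k \<in> {0..1} \<and> {t k..t (Suc k)} \<subseteq> ball (s k) (r (s k))"
    using balls unfolding t_def by metis
  have "p ` {min (s k) (t k)..max (s k) (t (Suc k))} \<subseteq> V (s k)" if k: "k < n" for k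
  proof (rule image_subsetI)
    fix y assume y: "y \<in> {min (s k) (t k)..max (s k) (t (Suc k))}"
    have "t k \<le> t (Suc k)" "0 \<le> t k"
      by (simp_all add: t_def divide_right_mono)
    have "t (Suc k) \<le> 1"
      using k by (simp add: t_def)
    have "t k \<in> {t k..t (Suc k)}" "t (Suc k) \<in> {t k..t (Suc k)}"
      using \<open>t k \<le> t (Suc k)\<close> by simp_all
    then have "t k \<in> ball (s k) (r (s k))" "t (Suc k) \<in> ball (s k) (r (s k))"
      using s[OF k] by blast+
    then have "dist (t k) (s k) < r (s k)" "dist (t (Suc k)) (s k) < r (s k)"
      by (simp_all add: dist_commute)
    then have "dist y (s k) < r (s k)"
      by (rule dist_lt_if_between) (use y in auto)
    moreover have "y \<in> {0..1}"
      using y s[OF k] \<open>0 \<le> t k\<close> \<open>t (Suc k) \<le> 1\<close>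
      by (auto simp: min_le_iff_disj le_max_iff_disj)
    ultimately show "p y \<in> V (s k)"
      using Vr[of "s k"] s[OF k] by blast
  qed
  then show ?thesis
  proof (intro that[of n s "\<lambda>k. V (s k)"] n(1) conjI)
    fix k assume k: "k < n"
    show "s k \<in> {0..1}" "lasso_nbhd X x0 H (subpathin p 0 (s k)) (V (s k))"
      using s[OF k] Vr by blast+
    show "p ` {min (s k) (real k / real n)..max (s k) (real (Suc k) / real n)} \<subseteq> V (s k)"
      using \<open>k < n\<close> \<open>\<And>k. k < n \<Longrightarrow> p ` {min (s k) (t k)..max (s k) (t (Suc k))} \<subseteq> V (s k)\<close>
      unfolding t_def by blast
  qed
qed

lemma lasso_ladder_step:
  assumes x0: "x0 \<in> topspace X" and H: "subgroup H (fundamental_group X x0)"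
    and p: "pathin X p" "p 0 = x0" and g: "pathin X g" "g 0 = x0"
    and uvs: "u \<in> {0..1}" "v \<in> {0..1}" "s \<in> {0..1}" "u \<le> v"
    and U: "lasso_nbhd X x0 H (subpathin p 0 s) U" "p ` {min s u..max s v} \<subseteq> U" "g ` {u..v} \<subseteq> U"
    and d: "pathin (subtopology X U) d" "d 0 = p u" "d 1 = g u"
    and d': "pathin (subtopology X U) d'" "d' 0 = p v" "d' 1 = g v"
    and rung: "loop_class X x0 (lasso (subpathin g 0 u) (path_reverse d) (subpathin p 0 u)) \<in> H"
  shows "loop_class X x0 (lasso (subpathin g 0 v) (path_reverse d') (subpathin p 0 v)) \<in> H"
proof -
  let ?S = "subtopology X U"
  have "{min s u..max s u} \<subseteq> {min s u..max s v}" "{min v s..max v s} \<subseteq> {min s u..max s v}"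
    using uvs(4) by (auto simp: min_def max_def)
  then have "p ` {min s u..max s u} \<subseteq> U" "p ` {min v s..max v s} \<subseteq> U"
    using U(2) by (meson image_mono order_trans)+
  then have \<sigma>: "pathin ?S (subpathin p s u)" and \<tau>: "pathin ?S (subpathin p v s)"
    using p(1) uvs by (auto intro: pathin_subtopology_subpathin)
  have \<gamma>: "pathin ?S (subpathin g u v)"
    using g(1) uvs U(3) by (intro pathin_subtopology_subpathin) auto
  have "pathin ?S (path_join (path_join (path_join (path_join (subpathin p s u) d)
      (subpathin g u v)) (path_reverse d')) (subpathin p v s))"
    using \<sigma> \<gamma> \<tau> d d' by (intro pathin_join pathin_reverse) auto
  then have "loop_class X x0 (lasso (subpathin p 0 s) (path_join (path_join (path_join (path_join
      (subpathin p s u) d) (subpathin g u v)) (path_reverse d')) (subpathin p v s)) (subpathin p 0 s)) \<in> H"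
    using U(1) unfolding lasso_nbhd_def by auto
  moreover have "loop_class X x0 (lasso (subpathin g 0 v) (path_reverse d') (subpathin p 0 v))
      = loop_class X x0 (lasso (subpathin g 0 u) (path_reverse d) (subpathin p 0 u)) \<otimes>\<^bsub>fundamental_group X x0\<^esub>
        loop_class X x0 (lasso (subpathin p 0 s) (path_join (path_join (path_join (path_join
          (subpathin p s u) d) (subpathin g u v)) (path_reverse d')) (subpathin p v s)) (subpathin p 0 s))"
  proof (rule lasso_rung_eq[OF x0])
    show "homotopic_pathin X (path_join (subpathin p 0 s) (subpathin p s u)) (subpathin p 0 u)"
      "homotopic_pathin X (path_join (subpathin g 0 u) (subpathin g u v)) (subpathin g 0 v)"
      "homotopic_pathin X (path_join (subpathin p 0 v) (subpathin p v s)) (subpathin p 0 s)"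
      using p g uvs by (auto intro: homotopic_pathin_subpathin_join)
  qed (use p g uvs d d' \<sigma> \<gamma> \<tau> in \<open>auto simp: pathin_subtopology intro: pathin_subpathin\<close>)
  ultimately show ?thesis
    using rung subgroup.m_closed[OF H] by simp
qed

lemma lasso_ladder:
  assumes x0: "x0 \<in> topspace X" and H: "subgroup H (fundamental_group X x0)"
    and p: "p \<in> loops X x0" and g: "g \<in> loops X x0"
    and t: "t 0 = 0" "t n = 1" "\<And>k. k \<le> n \<Longrightarrow> t k \<in> {0..1}" "\<And>k. t k \<le> t (Suc k)"
    and U: "\<And>k. k < n \<Longrightarrow> s k \<in> {0..1} \<and> lasso_nbhd X x0 H (subpathin p 0 (s k)) (U k) \<and>
      p ` {min (s k) (t k)..max (s k) (t (Suc k))} \<subseteq> U k \<and> g ` {t k..t (Suc k)} \<subseteq> U k \<and>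
      W k \<subseteq> U k \<and> W (Suc k) \<subseteq> U k"
    and W: "\<And>k. k \<le> n \<Longrightarrow> path_connectedin X (W k) \<and> p (t k) \<in> W k \<and> g (t k) \<in> W k"
  shows "loop_class X x0 (lasso g (\<lambda>_. x0) p) \<in> H"
proof -
  have pp: "pathin X p" "p 0 = x0" "p 1 = x0" and gg: "pathin X g" "g 0 = x0" "g 1 = x0"
    using loopsD[OF p] loopsD[OF g] by auto
  have "\<exists>d. pathin (subtopology X (W k)) d \<and> d 0 = p (t k) \<and> d 1 = g (t k) \<and>
      ((k = 0 \<or> k = n) \<longrightarrow> d = (\<lambda>_. x0))" if k: "k \<le> n" for k
  proof (cases "k = 0 \<or> k = n")
    case True
    then have "p (t k) = x0" "g (t k) = x0"
      using pp gg t by auto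
    then show ?thesis
      using x0 W[OF k] by (intro exI[where x="\<lambda>_. x0"]) (auto simp: pathin_subtopology)
  next
    case False
    obtain d where "pathin X d" "d \<in> {0..1} \<rightarrow> W k" "d 0 = p (t k)" "d 1 = g (t k)"
      using W[OF k] unfolding path_connectedin by blast
    then show ?thesis
      using False by (intro exI[where x=d]) (auto simp: pathin_subtopology)
  qed
  then obtain d where d: "\<And>k. k \<le> n \<Longrightarrow> pathin (subtopology X (W k)) (d k) \<and>
      d k 0 = p (t k) \<and> d k 1 = g (t k) \<and> ((k = 0 \<or> k = n) \<longrightarrow> d k = (\<lambda>_. x0))"
    by metis
  \<comment> \<open>The rungs \<open>d k\<close> are constant at both ends, so the ladder starts at the trivial loop
    and ends at \<open>g \<cdot> p\<inverse>\<close>.\<close>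
  define e where "e k = lasso (subpathin g 0 (t k)) (path_reverse (d k)) (subpathin p 0 (t k))" for k
  have "k \<le> n \<longrightarrow> loop_class X x0 (e k) \<in> H" for k
  proof (induction k)
    case 0
    have "e 0 = lasso (\<lambda>_. x0) (\<lambda>_. x0) (\<lambda>_. x0)"
      using d[of 0] pp gg t by (simp add: e_def subpathin_trivial path_reverse_def)
    moreover have "path_join (\<lambda>_. x0) (\<lambda>_. x0) = (\<lambda>_::real. x0)"
      by (simp add: path_join_def)
    moreover have "loop_class X x0 (lasso (\<lambda>_. x0) (\<lambda>_. x0) (\<lambda>_. x0)) = \<one>\<^bsub>fundamental_group X x0\<^esub>"
      by (rule lasso_eq_one) (use x0 calculation(2) in \<open>auto intro: homotopic_pathin_refl\<close>)
    ultimately have "loop_class X x0 (e 0) = \<one>\<^bsub>fundamental_group X x0\<^esub>"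
      by simp
    then show ?case
      using subgroup.one_closed[OF H] by simp
  next
    case (Suc k)
    show ?case
    proof
      assume k: "Suc k \<le> n"
      show "loop_class X x0 (e (Suc k)) \<in> H"
        unfolding e_def
      proof (rule lasso_ladder_step[OF x0 H pp(1,2) gg(1,2), where s="s k" and U="U k" and d="d k"])
        show "loop_class X x0 (lasso (subpathin g 0 (t k)) (path_reverse (d k)) (subpathin p 0 (t k))) \<in> H"
          using Suc k by (simp add: e_def)
        show "pathin (subtopology X (U k)) (d k)" "pathin (subtopology X (U k)) (d (Suc k))"
          using d[of k] d[of "Suc k"] U[of k] k by (auto intro: pathin_subtopology_mono)
      qed (use d[of k] d[of "Suc k"] U[of k] t k in auto)
    qed
  qed
  then have "loop_class X x0 (e n) \<in> H"
    by blast
  moreover have "e n = lasso g (\<lambda>_. x0) p"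
    using d[of n] t by (simp add: e_def subpathin_0_1 path_reverse_def)
  ultimately show ?thesis
    by simp
qed

lemma path_connected_nbhds:
  assumes "locally_path_connected_space X" "\<forall>k\<in>I. openin X (V k) \<and> x k \<in> V k"
  shows "\<exists>W. \<forall>k\<in>I. openin X (W k) \<and> path_connectedin X (W k) \<and> x k \<in> W k \<and> W k \<subseteq> V k"
proof -
  have "\<exists>W. openin X W \<and> path_connectedin X W \<and> x k \<in> W \<and> W \<subseteq> V k" if "k \<in> I" for k
    using assms(1) assms(2)[rule_format, OF that]
    unfolding locally_path_connected_space_alt neighbourhood_base_of by blast
  then show ?thesis
    by (intro bchoice ballI)
qed

lemma path_connected_nbhds_of_chain:
  assumes lpc: "locally_path_connected_space X" and x: "\<And>k. k \<le> n \<Longrightarrow> x k \<in> topspace X"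
    and U: "\<And>k. k < n \<Longrightarrow> openin X (U k) \<and> x k \<in> U k \<and> x (Suc k) \<in> U k"
  shows "\<exists>W. \<forall>k\<in>{..n}. openin X (W k) \<and> path_connectedin X (W k) \<and> x k \<in> W k \<and>
    (\<forall>j<n. j = k \<or> Suc j = k \<longrightarrow> W k \<subseteq> U j)"
proof -
  define J where "J k = {j. j < n \<and> (j = k \<or> Suc j = k)}" for k
  have nbhds: "\<forall>k\<in>{..n}. openin X ((\<Inter>j\<in>J k. U j) \<inter> topspace X) \<and>
      x k \<in> (\<Inter>j\<in>J k. U j) \<inter> topspace X"
  proof
    fix k assume k: "k \<in> {..n}"
    have "finite (J k)"
      by (simp add: J_def)
    then have "openin X ((\<Inter>j\<in>J k. U j) \<inter> topspace X)"
      using U by (intro openin_INT) (auto simp: J_def)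
    moreover have "x k \<in> U j" if "j \<in> J k" for j
      using U that by (auto simp: J_def)
    ultimately show "openin X ((\<Inter>j\<in>J k. U j) \<inter> topspace X) \<and> x k \<in> (\<Inter>j\<in>J k. U j) \<inter> topspace X"
      using x k by blast
  qed
  obtain W where "\<forall>k\<in>{..n}. openin X (W k) \<and> path_connectedin X (W k) \<and>
      x k \<in> W k \<and> W k \<subseteq> (\<Inter>j\<in>J k. U j) \<inter> topspace X"
    using path_connected_nbhds[OF lpc nbhds] by blast
  then show ?thesis
    by (intro exI[where x=W]) (auto simp: J_def)
qed

text \<open>Near a loop \<open>p\<close> with \<open>[p] \<in> H\<close>, a loop \<open>g\<close> is controlled on the pieces of a fine
  subdivision of \<open>[0,1]\<close>, each mapped into a lasso neighbourhood, and at the subdivision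
  points, which must lie in path connected neighbourhoods of the points of \<open>p\<close>; the paths
  joining \<open>p\<close> to \<open>g\<close> there are the rungs of the ladder in \<open>lasso_ladder\<close>.\<close>

lemma loop_space_top_nbhd_in_preimage:
  assumes x0: "x0 \<in> topspace X" and lpc: "locally_path_connected_space X"
    and H: "subgroup H (fundamental_group X x0)"
    and lasso_nbhds: "\<And>\<alpha>. pathin X \<alpha> \<Longrightarrow> \<alpha> 0 = x0 \<Longrightarrow> \<exists>U. lasso_nbhd X x0 H \<alpha> U"
    and p: "p \<in> loops X x0" "loop_class X x0 p \<in> H"
  shows "\<exists>N. openin (loop_space_top X x0) N \<and> p \<in> N \<and> N \<subseteq> {q \<in> loops X x0. loop_class X x0 q \<in> H}"
proof -
  obtain n s U where n: "n > 0" and sU: "\<And>k. k < n \<Longrightarrow> s k \<in> {0..1} \<and>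
      lasso_nbhd X x0 H (subpathin p 0 (s k)) (U k) \<and>
      p ` {min (s k) (real k / real n)..max (s k) (real (Suc k) / real n)} \<subseteq> U k"
    by (rule lasso_nbhd_subdivision[OF lasso_nbhds p(1)]) auto
  define t where "t k = real k / real n" for k
  have t: "t 0 = 0" "t n = 1" "\<And>k. k \<le> n \<Longrightarrow> t k \<in> {0..1}" "\<And>k. t k \<le> t (Suc k)"
    using n by (auto simp: t_def divide_le_eq_1 divide_right_mono)
  have sU': "\<And>k. k < n \<Longrightarrow> s k \<in> {0..1} \<and> lasso_nbhd X x0 H (subpathin p 0 (s k)) (U k) \<and>
      p ` {min (s k) (t k)..max (s k) (t (Suc k))} \<subseteq> U k"
    using sU unfolding t_def .
  have oU: "openin X (U k)" if "k < n" for k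
    using sU'[OF that] by (simp add: lasso_nbhd_def)
  have pU: "p ` {t k..t (Suc k)} \<subseteq> U k" if "k < n" for k
  proof -
    have "{t k..t (Suc k)} \<subseteq> {min (s k) (t k)..max (s k) (t (Suc k))}"
      by (auto simp: min_le_iff_disj le_max_iff_disj)
    then show ?thesis
      using sU'[OF that] by (meson image_mono order_trans)
  qed
  have "p (t k) \<in> topspace X" if "k \<le> n" for k
    using continuous_map_image_subset_topspace[OF loopsD[OF p(1), THEN conjunct1, unfolded pathin_def]]
      t(3)[OF that] by auto
  moreover have "openin X (U k) \<and> p (t k) \<in> U k \<and> p (t (Suc k)) \<in> U k" if "k < n" for k
    using oU[OF that] pU[OF that] t(4)[of k] by auto
  ultimately obtain W where "\<forall>k\<in>{..n}. openin X (W k) \<and> path_connectedin X (W k) \<and> p (t k) \<in> W k \<and>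
      (\<forall>j<n. j = k \<or> Suc j = k \<longrightarrow> W k \<subseteq> U j)"
    using path_connected_nbhds_of_chain[OF lpc, of n "\<lambda>k. p (t k)" U] by blast
  then have W: "\<And>k. k \<le> n \<Longrightarrow> openin X (W k) \<and> path_connectedin X (W k) \<and> p (t k) \<in> W k"
    and WU: "\<And>k. k < n \<Longrightarrow> W k \<subseteq> U k \<and> W (Suc k) \<subseteq> U k"
    by auto
  define N where "N = {g \<in> loops X x0. (\<forall>k<n. g ` {t k..t (Suc k)} \<subseteq> U k) \<and> (\<forall>k\<le>n. g (t k) \<in> W k)}"
  have "openin (loop_space_top X x0) N"
    unfolding N_def using t(3) oU W by (intro openin_loop_space_top_subdivision) auto
  moreover have "p \<in> N"
    unfolding N_def using p(1) pU W by auto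
  moreover have "loop_class X x0 g \<in> H" if g: "g \<in> N" for g
  proof -
    have gl: "g \<in> loops X x0"
      using g by (simp add: N_def)
    have gU: "g ` {t k..t (Suc k)} \<subseteq> U k" if "k < n" for k
      using g that by (simp add: N_def)
    have gW: "g (t k) \<in> W k" if "k \<le> n" for k
      using g that by (simp add: N_def)
    have "loop_class X x0 (lasso g (\<lambda>_. x0) p) \<in> H"
    proof (rule lasso_ladder[OF x0 H p(1) gl t, where s=s and U=U and W=W])
      show "s k \<in> {0..1} \<and> lasso_nbhd X x0 H (subpathin p 0 (s k)) (U k) \<and>
          p ` {min (s k) (t k)..max (s k) (t (Suc k))} \<subseteq> U k \<and> g ` {t k..t (Suc k)} \<subseteq> U k \<and>
          W k \<subseteq> U k \<and> W (Suc k) \<subseteq> U k" if "k < n" for k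
        using sU'[OF that] gU[OF that] WU[OF that] by blast
      show "path_connectedin X (W k) \<and> p (t k) \<in> W k \<and> g (t k) \<in> W k" if "k \<le> n" for k
        using W[OF that] gW[OF that] by blast
    qed
    then show ?thesis
      using loop_class_eq_lasso_mult[OF x0 p(1) gl] subgroup.m_closed[OF H _ p(2)] by simp
  qed
  ultimately show ?thesis
    by (auto simp: N_def)
qed

lemma openin_pi1_qtop_if_lasso_nbhds:
  assumes x0: "x0 \<in> topspace X" and lpc: "locally_path_connected_space X"
    and H: "subgroup H (fundamental_group X x0)"
    and lasso_nbhds: "\<And>\<alpha>. pathin X \<alpha> \<Longrightarrow> \<alpha> 0 = x0 \<Longrightarrow> \<exists>U. lasso_nbhd X x0 H \<alpha> U"
  shows "openin (pi1_qtop X x0) H"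
  unfolding openin_pi1_qtop
proof
  show "H \<subseteq> carrier (fundamental_group X x0)"
    using subgroup.subset[OF H] .
  show "openin (loop_space_top X x0) {p \<in> loops X x0. loop_class X x0 p \<in> H}"
    unfolding openin_subopen[of _ "{p \<in> loops X x0. loop_class X x0 p \<in> H}"]
    using loop_space_top_nbhd_in_preimage[OF x0 lpc H lasso_nbhds] by blast
qed

lemma homotopically_hausdorff_rel_if_lasso_nbhds:
  assumes x0: "x0 \<in> topspace X" and H: "subgroup H (fundamental_group X x0)"
    and lasso_nbhds: "\<And>\<alpha>. pathin X \<alpha> \<Longrightarrow> \<alpha> 0 = x0 \<Longrightarrow> \<exists>U. lasso_nbhd X x0 H \<alpha> U"
  shows "homotopically_hausdorff_rel X x0 H"
  unfolding homotopically_hausdorff_rel_def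
proof (intro ballI allI impI)
  let ?G = "fundamental_group X x0"
  interpret G: group ?G by (rule group_fundamental_group[OF x0])
  fix g \<alpha> assume g: "g \<in> carrier ?G - H" and \<alpha>: "pathin X \<alpha> \<and> \<alpha> 0 = x0"
  obtain U where U: "lasso_nbhd X x0 H \<alpha> U"
    using lasso_nbhds \<alpha> by blast
  have "loop_class X x0 (lasso \<alpha> \<gamma> \<alpha>) \<notin> H #>\<^bsub>?G\<^esub> g"
    if \<gamma>: "pathin (subtopology X U) \<gamma>" "\<gamma> 0 = \<alpha> 1" "\<gamma> 1 = \<alpha> 1" for \<gamma>
  proof
    assume coset: "loop_class X x0 (lasso \<alpha> \<gamma> \<alpha>) \<in> H #>\<^bsub>?G\<^esub> g"
    have "loop_class X x0 (lasso \<alpha> \<gamma> \<alpha>) \<in> H"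
      using U \<gamma> by (auto simp: lasso_nbhd_def)
    then have "H #>\<^bsub>?G\<^esub> loop_class X x0 (lasso \<alpha> \<gamma> \<alpha>) = H"
      using subgroup.subset[OF H] by (intro G.coset_join2 H) auto
    then have "H #>\<^bsub>?G\<^esub> g = H"
      using G.repr_independence[OF coset _ H] g by simp
    then show False
      using G.rcos_self[OF _ H, of g] g by auto
  qed
  then show "\<exists>U. openin X U \<and> \<alpha> 1 \<in> U \<and>
      \<not> (\<exists>\<gamma>. pathin (subtopology X U) \<gamma> \<and> \<gamma> 0 = \<alpha> 1 \<and> \<gamma> 1 = \<alpha> 1 \<and>
        loop_class X x0 (path_join (path_join \<alpha> \<gamma>) (path_reverse \<alpha>)) \<in> H #>\<^bsub>?G\<^esub> g)"
    using U unfolding lasso_nbhd_def lasso_def by blast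
qed

lemma r_coset_carrier_update: "H #>\<^bsub>G\<lparr>carrier := K\<rparr>\<^esub> a = H #>\<^bsub>G\<^esub> a"
  by (simp add: r_coset_def)

text \<open>Each of the finitely many cosets \<open>H k \<noteq> H\<close> inside \<open>K\<close> is avoided by the small lassos
  at \<open>\<alpha> 1\<close>, and small lassos land in \<open>K\<close>; intersecting these neighbourhoods leaves only \<open>H\<close>.\<close>

lemma lasso_nbhd_if_homotopically_hausdorff_rel:
  assumes x0: "x0 \<in> topspace X"
    and K: "subgroup K (fundamental_group X x0)" "openin (pi1_qtop X x0) K"
    and H: "subgroup H (fundamental_group X x0)" "H \<subseteq> K"
    and fin: "finite (rcosets\<^bsub>(fundamental_group X x0)\<lparr>carrier := K\<rparr>\<^esub> H)"
    and hh: "homotopically_hausdorff_rel X x0 H"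
    and \<alpha>: "pathin X \<alpha>" "\<alpha> 0 = x0"
  shows "\<exists>U. lasso_nbhd X x0 H \<alpha> U"
proof -
  let ?G = "fundamental_group X x0"
  interpret G: group ?G by (rule group_fundamental_group[OF x0])
  obtain U0 where U0: "lasso_nbhd X x0 K \<alpha> U0"
    using lasso_nbhd_if_openin_pi1_qtop[OF K(2) subgroup.one_closed[OF K(1)] \<alpha>] by blast
  define F where "F = {C \<in> rcosets\<^bsub>?G\<lparr>carrier := K\<rparr>\<^esub> H. C \<noteq> H}"
  have "\<exists>V. openin X V \<and> \<alpha> 1 \<in> V \<and> \<not> (\<exists>\<gamma>. pathin (subtopology X V) \<gamma> \<and> \<gamma> 0 = \<alpha> 1 \<and> \<gamma> 1 = \<alpha> 1 \<and>
      loop_class X x0 (lasso \<alpha> \<gamma> \<alpha>) \<in> C)" if C: "C \<in> F" for C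
  proof -
    obtain k where k: "k \<in> K" "C = H #>\<^bsub>?G\<^esub> k"
      using C unfolding F_def RCOSETS_def by (auto simp: r_coset_carrier_update)
    have "k \<in> carrier ?G"
      using k subgroup.subset[OF K(1)] by blast
    moreover have "k \<notin> H"
      using C k G.coset_join2[OF \<open>k \<in> carrier ?G\<close> H(1)] by (auto simp: F_def)
    ultimately show ?thesis
      using hh \<alpha> k unfolding homotopically_hausdorff_rel_def lasso_def by blast
  qed
  then obtain V where V: "\<And>C. C \<in> F \<Longrightarrow> openin X (V C) \<and> \<alpha> 1 \<in> V C \<and>
      \<not> (\<exists>\<gamma>. pathin (subtopology X (V C)) \<gamma> \<and> \<gamma> 0 = \<alpha> 1 \<and> \<gamma> 1 = \<alpha> 1 \<and> loop_class X x0 (lasso \<alpha> \<gamma> \<alpha>) \<in> C)"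
    by metis
  define U where "U = U0 \<inter> ((\<Inter>C\<in>F. V C) \<inter> topspace X)"
  have "openin X U"
    unfolding U_def using U0 fin V by (intro openin_Int openin_INT) (auto simp: F_def lasso_nbhd_def)
  moreover have "\<alpha> 1 \<in> U"
    unfolding U_def using U0 V path_finish_in_topspace[OF \<alpha>(1)] by (auto simp: lasso_nbhd_def)
  moreover have "loop_class X x0 (lasso \<alpha> \<gamma> \<alpha>) \<in> H"
    if \<gamma>: "pathin (subtopology X U) \<gamma>" "\<gamma> 0 = \<alpha> 1" "\<gamma> 1 = \<alpha> 1" for \<gamma>
  proof (rule ccontr)
    let ?c = "loop_class X x0 (lasso \<alpha> \<gamma> \<alpha>)"
    assume "?c \<notin> H"
    have "pathin (subtopology X U0) \<gamma>"
      using \<gamma>(1) by (rule pathin_subtopology_mono) (auto simp: U_def)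
    then have "?c \<in> K"
      using U0 \<gamma> by (auto simp: lasso_nbhd_def)
    then have c: "?c \<in> carrier ?G"
      using subgroup.subset[OF K(1)] by blast
    have "H #>\<^bsub>?G\<^esub> ?c \<in> F"
      using \<open>?c \<in> K\<close> \<open>?c \<notin> H\<close> G.rcos_self[OF c H(1)]
      unfolding F_def RCOSETS_def by (auto simp: r_coset_carrier_update)
    moreover have "pathin (subtopology X (V (H #>\<^bsub>?G\<^esub> ?c))) \<gamma>"
      using \<gamma>(1) by (rule pathin_subtopology_mono) (use calculation in \<open>auto simp: U_def\<close>)
    ultimately show False
      using V \<gamma> G.rcos_self[OF c H(1)] by blast
  qed
  ultimately show ?thesis
    unfolding lasso_nbhd_def by blast
qed

theorem proposition2p13:
  fixes X :: "'a topology" and x0 :: 'a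
    and H K :: "((real \<Rightarrow> 'a) set) set"
  assumes "connected_space X"
    and "locally_path_connected_space X"
    and "x0 \<in> topspace X"
    and "subgroup K (fundamental_group X x0)"
    and "openin (pi1_qtop X x0) K"
    and "subgroup H (fundamental_group X x0)"
    and "H \<subseteq> K"
    and "finite (rcosets\<^bsub>(fundamental_group X x0)\<lparr>carrier := K\<rparr>\<^esub> H)"
  shows "openin (pi1_qtop X x0) H \<longleftrightarrow> homotopically_hausdorff_rel X x0 H"
proof
  assume H_open: "openin (pi1_qtop X x0) H"
  have "\<exists>U. lasso_nbhd X x0 H \<alpha> U" if "pathin X \<alpha>" "\<alpha> 0 = x0" for \<alpha>
    using lasso_nbhd_if_openin_pi1_qtop[OF H_open subgroup.one_closed[OF assms(6)] that] .
  then show "homotopically_hausdorff_rel X x0 H"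
    by (rule homotopically_hausdorff_rel_if_lasso_nbhds[OF assms(3,6)])
next
  assume hh: "homotopically_hausdorff_rel X x0 H"
  have "\<exists>U. lasso_nbhd X x0 H \<alpha> U" if "pathin X \<alpha>" "\<alpha> 0 = x0" for \<alpha>
    using lasso_nbhd_if_homotopically_hausdorff_rel[OF assms(3-8) hh that] .
  then show "openin (pi1_qtop X x0) H"
    by (rule openin_pi1_qtop_if_lasso_nbhds[OF assms(3,2,6)])
qed

end
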